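(* For every CICS instance $\mathbbm{I}=(\mathcal{F},\mathbb{M})$, \[ \mathrm{ComGap}(\mathbbm{I})\le \sup_{\mathcal{D}}\frac{\mathrm{ExAnte}(\mathcal{F},\mathcal{D})}{\mathrm{FreeOrder}(\mathcal{F},\mathcal{D})}, \] the supremum being over all product distributions $\mathcal{D}$ on $\mathbb{R}^n$ (i.e., the commitment gap is at most the best ratio achievable by an ex ante free-order prophet inequality for $\mathcal{F}$).
   Context: CICS: an instance $\mathbbm{I}=(\mathcal{F},\mathbb{M})$ consists of a downwards-closed $\mathcal{F}\subseteq 2^{[n]}$ and $n$ acyclic Markov decision processes $\mathcal{M}_i$, each with finite state set, root $\sigma_i$, actions $A_i(s)$ with nonnegative costs and transition distributions $\Pi_i(s,a)$, sink (terminal) states $T_i$ with values $v_i(t)\ge0$. A policy starts at the roots and repeatedly either advances some non-terminal $\mathcal{M}_i$ via an action (paying its cost, random transition), or halts selecting $S\in\mathcal{F}$ among MDPs in terminal states, collecting $\sum_{i\in S}v_i(s_i)$; utility is expected value minus expected cost, and $\mathrm{OPT}(\mathbbm{I})$ is the optimal utility. A commitment $(\pi_1,\dots,\pi_n)$ assigns to each state $s$ of $\mathcal{M}_i$ a distribution $\pi_i(s)$ over $A_i(s)$; a committing policy draws its action from $\pi_i(s)$ whenever it advances $\mathcal{M}_i$ at state $s$ (other decisions may be adaptive). $\mathrm{ComGap}(\mathbbm{I})=\mathrm{OPT}(\mathbbm{I})/\sup\{\mathrm{Util}(\mathcal{T}):\mathcal{T}\text{ committing}\}$. For a product distribution $\mathcal{D}=D_1\times\cdots\times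 D_n$: $\mathrm{ExAnte}(\mathcal{F},\mathcal{D})=\max_{q\in\mathcal{P}(\mathcal{F})}\sum_i q_iF_{D_i}(q_i)$, where $\mathcal{P}(\mathcal{F})$ is the convex hull of indicator vectors of sets in $\mathcal{F}$ and $F_D(q)$ is the expectation of a draw from $D$ conditioned on being in its top $q$ quantile (splitting point masses). A free-order online algorithm starts with $S=R=\emptyset$ and iteratively chooses (adaptively) $i\notin S\cup R$ with $S\cup\{i\}\in\mathcal{F}$ and a threshold $\tau_i$, observes $x_i$, and accepts ($S:=S\cup\{i\}$) iff $x_i\ge\tau_i$, else rejects ($R:=R\cup\{i\}$); $\mathrm{FreeOrder}(\mathcal{F},\mathcal{D})$ is the maximum expected value $\mathbb{E}[\sum_{i\in S}x_i]$ over such algorithms. *)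

theory Defs
  imports "HOL-Analysis.Analysis" "HOL-Probability.Probability"
begin

record ('s,'a) mdp =
  m_states :: "'s set"
  m_root   :: 's
  m_term   :: "'s set"
  m_acts   :: "'s \<Rightarrow> 'a set"
  m_cost   :: "'s \<Rightarrow> 'a \<Rightarrow> real"
  m_trans  :: "'s \<Rightarrow> 'a \<Rightarrow> 's pmf"
  m_val    :: "'s \<Rightarrow> real"

definition is_mdp :: "('s,'a) mdp \<Rightarrow> bool" where
  "is_mdp M \<longleftrightarrow>
     finite (m_states M) \<and> m_root M \<in> m_states M \<and> m_term M \<subseteq> m_states M \<and>
     (\<forall>t\<in>m_term M. m_acts M t = {} \<and> 0 \<le> m_val M t) \<and>
     (\<forall>s\<in>m_states M - m_term M. finite (m_acts M s) \<and> m_acts M s \<noteq> {} \<and>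
        (\<forall>a\<in>m_acts M s. 0 \<le> m_cost M s a \<and> set_pmf (m_trans M s a) \<subseteq> m_states M)) \<and>
     acyclic {(s, s'). s \<in> m_states M - m_term M \<and>
                 (\<exists>a\<in>m_acts M s. s' \<in> set_pmf (m_trans M s a))}"

definition downward_closed :: "'n set set \<Rightarrow> bool" where
  "downward_closed F \<longleftrightarrow> (\<forall>S\<in>F. \<forall>T. T \<subseteq> S \<longrightarrow> T \<in> F)"

text \<open>Policies as (finite-depth) decision trees over the whole history:
  either halt selecting a set S, or advance MDP i with an action drawn from
  a distribution p, continuing depending on the realised action and the new state.\<close>
datatype ('n,'a,'s) policy =
    Halt "'n set"
  | Adv 'n "'a pmf" "'a \<Rightarrow> 's \<Rightarrow> ('n,'a,'s) policy"

primrec util :: "('n \<Rightarrow> ('s,'a) mdp) \<Rightarrow> ('n \<Rightarrow> 's) \<Rightarrow> ('n,'a,'s) policy \<Rightarrow> real" where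
  "util M c (Halt S) = (\<Sum>i\<in>S. m_val (M i) (c i))"
| "util M c (Adv i p k) =
     measure_pmf.expectation p (\<lambda>a. - m_cost (M i) (c i) a +
        measure_pmf.expectation (m_trans (M i) (c i) a) (\<lambda>s'. util M (c(i := s')) (k a s')))"

inductive valid_pol :: "'n set set \<Rightarrow> ('n \<Rightarrow> ('s,'a) mdp) \<Rightarrow> ('n \<Rightarrow> 's) \<Rightarrow> ('n,'a,'s) policy \<Rightarrow> bool"
  for F M where
  halt: "S \<in> F \<Longrightarrow> (\<forall>i\<in>S. c i \<in> m_term (M i)) \<Longrightarrow> valid_pol F M c (Halt S)"
| adv: "c i \<notin> m_term (M i) \<Longrightarrow> set_pmf p \<subseteq> m_acts (M i) (c i) \<Longrightarrow>
        (\<forall>a\<in>set_pmf p. \<forall>s'\<in>set_pmf (m_trans (M i) (c i) a). valid_pol F M (c(i := s')) (k a s')) \<Longrightarrow>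
        valid_pol F M c (Adv i p k)"

definition roots :: "('n \<Rightarrow> ('s,'a) mdp) \<Rightarrow> 'n \<Rightarrow> 's" where
  "roots M = (\<lambda>i. m_root (M i))"

definition OPT :: "'n set set \<Rightarrow> ('n \<Rightarrow> ('s,'a) mdp) \<Rightarrow> real" where
  "OPT F M = Sup {util M (roots M) t | t. valid_pol F M (roots M) t}"

definition commitment :: "('n \<Rightarrow> ('s,'a) mdp) \<Rightarrow> ('n \<Rightarrow> 's \<Rightarrow> 'a pmf) \<Rightarrow> bool" where
  "commitment M \<pi> \<longleftrightarrow>
     (\<forall>i. \<forall>s\<in>m_states (M i) - m_term (M i). set_pmf (\<pi> i s) \<subseteq> m_acts (M i) s)"

inductive commits :: "('n \<Rightarrow> 's \<Rightarrow> 'a pmf) \<Rightarrow> ('n \<Rightarrow> 's) \<Rightarrow> ('n,'a,'s) policy \<Rightarrow> bool"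
  for \<pi> where
  "commits \<pi> c (Halt S)"
| "p = \<pi> i (c i) \<Longrightarrow> (\<forall>a s'. commits \<pi> (c(i := s')) (k a s')) \<Longrightarrow> commits \<pi> c (Adv i p k)"

definition commit_OPT :: "'n set set \<Rightarrow> ('n \<Rightarrow> ('s,'a) mdp) \<Rightarrow> real" where
  "commit_OPT F M = Sup {util M (roots M) t | t \<pi>.
      commitment M \<pi> \<and> valid_pol F M (roots M) t \<and> commits \<pi> (roots M) t}"

definition ComGap :: "'n set set \<Rightarrow> ('n \<Rightarrow> ('s,'a) mdp) \<Rightarrow> ereal" where
  "ComGap F M = ereal (OPT F M) / ereal (commit_OPT F M)"

definition product_dist :: "('n \<Rightarrow> real measure) \<Rightarrow> bool" where
  "product_dist D \<longleftrightarrow>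
     (\<forall>i. prob_space (D i) \<and> sets (D i) = sets borel \<and> integrable (D i) (\<lambda>x. x))"

definition indic_vec :: "'n set \<Rightarrow> real ^ 'n::finite" where
  "indic_vec S = (\<chi> i. if i \<in> S then 1 else 0)"

definition polytope :: "'n::finite set set \<Rightarrow> (real ^ 'n) set" where
  "polytope F = convex hull (indic_vec ` F)"

text \<open>w is the (fractional) indicator of the top-q quantile of D:
  1 above a threshold, 0 below it, fractional at the threshold (splitting point masses).\<close>
definition top_weight :: "real measure \<Rightarrow> real \<Rightarrow> (real \<Rightarrow> real) \<Rightarrow> bool" where
  "top_weight D q w \<longleftrightarrow> w \<in> borel_measurable borel \<and> (\<forall>x. 0 \<le> w x \<and> w x \<le> 1) \<and>
     (\<integral>x. w x \<partial>D) = q \<and> (\<forall>x y. x < y \<longrightarrow> 0 < w x \<longrightarrow> w y = 1)"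

text \<open>F_D(q): expectation of a draw from D conditioned on lying in its top q quantile.\<close>
definition F_top :: "real measure \<Rightarrow> real \<Rightarrow> real" where
  "F_top D q = (SOME v. \<exists>w. top_weight D q w \<and> v = (\<integral>x. x * w x \<partial>D)) / q"

definition ExAnte :: "'n::finite set set \<Rightarrow> ('n \<Rightarrow> real measure) \<Rightarrow> real" where
  "ExAnte F D = Sup {\<Sum>i\<in>UNIV. q $ i * F_top (D i) (q $ i) | q. q \<in> polytope F}"

text \<open>Free-order online algorithms as adaptive decision trees: probe i with threshold tau,
  observe x, accept iff x >= tau, continue depending on x.\<close>
datatype 'n fo_alg = FHalt | Probe 'n real "real \<Rightarrow> 'n fo_alg" "real \<Rightarrow> 'n fo_alg"

primrec fo_val :: "('n \<Rightarrow> real measure) \<Rightarrow> 'n fo_alg \<Rightarrow> real" where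
  "fo_val D FHalt = 0"
| "fo_val D (Probe i \<tau> ka kr) =
     (\<integral>x. (if \<tau> \<le> x then x + fo_val D (ka x) else fo_val D (kr x)) \<partial>D i)"

inductive fo_adm :: "'n set set \<Rightarrow> ('n \<Rightarrow> real measure) \<Rightarrow> 'n set \<Rightarrow> 'n set \<Rightarrow> 'n fo_alg \<Rightarrow> bool"
  for F D where
  "fo_adm F D S R FHalt"
| "i \<notin> S \<union> R \<Longrightarrow> insert i S \<in> F \<Longrightarrow>
   (\<forall>x. fo_adm F D (insert i S) R (ka x)) \<Longrightarrow> (\<forall>x. fo_adm F D S (insert i R) (kr x)) \<Longrightarrow>
   integrable (D i) (\<lambda>x. if \<tau> \<le> x then x + fo_val D (ka x) else fo_val D (kr x)) \<Longrightarrow>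
   fo_adm F D S R (Probe i \<tau> ka kr)"

definition FreeOrder :: "'n set set \<Rightarrow> ('n \<Rightarrow> real measure) \<Rightarrow> real" where
  "FreeOrder F D = Sup {fo_val D t | t. fo_adm F D {} {} t}"

end

theory Submission
  imports Defs
begin

text \<open>Fix a policy and let \<open>q\<close> be its vector of selection probabilities, a point of the
  polytope of \<open>F\<close>. Charging a price \<open>l i\<close> for selecting \<open>i\<close> decouples the MDPs: the utility is
  at most \<open>\<Sum>i. l i * q i + W i (l i)\<close>, where \<open>W i l\<close> is the value of \<open>M i\<close> alone when selection
  costs \<open>l\<close>. A greedy deterministic commitment is optimal for this single-MDP problem, so
  \<open>W i l\<close> is the largest excess \<open>E[(\<kappa> - l)\<^sup>+]\<close> over the capped values \<open>\<kappa>\<close> of \<open>M i\<close> under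
  deterministic commitments. Choosing \<open>l i\<close> to minimise \<open>l * q i + W i l\<close>, the first-order
  conditions provide two optimal commitments whose mixture \<open>K i\<close> has \<open>l i\<close> as an upper
  \<open>q i\<close>-quantile; then \<open>l i * q i + W i (l i) = q i * F_{K i}(q i)\<close>, so the utility is at most
  \<open>ExAnte F K\<close>. Conversely, a free-order algorithm on the \<open>K i\<close> is simulated by a committing
  policy that advances \<open>M i\<close> along its commitment while the running minimum of the caps stays
  above the threshold; as the value of the algorithm is affine in each undecided coordinate, the
  mixtures cost nothing, and \<open>FreeOrder F K\<close> is at most the best utility of a committing policy.\<close>

abbreviation E :: "'x pmf \<Rightarrow> ('x \<Rightarrow> real) \<Rightarrow> real" where
  "E p f \<equiv> measure_pmf.expectation p f"

lemma E_cong: "(\<And>x. x \<in> set_pmf p \<Longrightarrow> f x = g x) \<Longrightarrow> E p f = E p g"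
  by (intro integral_cong_AE) (auto simp: AE_measure_pmf_iff)

lemma E_add: "finite (set_pmf p) \<Longrightarrow> E p (\<lambda>x. f x + g x) = E p f + E p g"
  by (intro Bochner_Integration.integral_add integrable_measure_pmf_finite)

lemma E_diff: "finite (set_pmf p) \<Longrightarrow> E p (\<lambda>x. f x - g x) = E p f - E p g"
  by (intro Bochner_Integration.integral_diff integrable_measure_pmf_finite)

lemma E_sum: "finite (set_pmf p) \<Longrightarrow> E p (\<lambda>x. \<Sum>j\<in>J. f j x) = (\<Sum>j\<in>J. E p (f j))"
  by (intro Bochner_Integration.integral_sum integrable_measure_pmf_finite)

lemma E_mono: "finite (set_pmf p) \<Longrightarrow> (\<And>x. x \<in> set_pmf p \<Longrightarrow> f x \<le> g x) \<Longrightarrow> E p f \<le> E p g"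
  by (intro integral_mono_AE integrable_measure_pmf_finite) (auto simp: AE_measure_pmf_iff)

lemma E_nonneg: "(\<And>x. x \<in> set_pmf p \<Longrightarrow> 0 \<le> f x) \<Longrightarrow> 0 \<le> E p f"
  by (intro integral_nonneg_AE) (auto simp: AE_measure_pmf_iff)

lemma E_as_sum: "finite (set_pmf p) \<Longrightarrow> E p f = (\<Sum>x\<in>set_pmf p. f x * pmf p x)"
  by (rule integral_measure_pmf_real) auto

lemma E_pos:
  assumes "finite (set_pmf p)" and "\<And>x. x \<in> set_pmf p \<Longrightarrow> 0 \<le> f x"
    and "y \<in> set_pmf p" and "0 < f y"
  shows "0 < E p f"
  unfolding E_as_sum[OF assms(1)]
  using assms by (intro sum_pos2[of _ y]) (auto simp: pmf_positive)

lemma E_le_some_value: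
  assumes fin: "finite (set_pmf p)"
  shows "\<exists>x\<in>set_pmf p. E p f \<le> f x"
proof (rule ccontr)
  assume "\<not> ?thesis"
  moreover obtain y where "y \<in> set_pmf p"
    by (meson ex_in_conv set_pmf_not_empty)
  ultimately have "0 < E p (\<lambda>x. E p f - f x)"
    using fin by (intro E_pos[of _ _ y]) (auto simp: not_le)
  then show False using fin by (simp add: E_diff)
qed

lemma E_bind:
  assumes "finite (set_pmf p)" and "\<And>x. x \<in> set_pmf p \<Longrightarrow> finite (set_pmf (q x))"
  shows "E (bind_pmf p q) f = E p (\<lambda>x. E (q x) f)"
proof -
  have "E (bind_pmf p q) f = (\<Sum>x\<in>set_pmf p. pmf p x *\<^sub>R E (q x) f)"
    using assms by (intro pmf_expectation_bind) auto
  then show ?thesis by (simp add: E_as_sum[OF assms(1)] mult.commute)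
qed

definition mix_pmf :: "real \<Rightarrow> 'x pmf \<Rightarrow> 'x pmf \<Rightarrow> 'x pmf" where
  "mix_pmf \<alpha> A B = bind_pmf (bernoulli_pmf \<alpha>) (\<lambda>b. if b then A else B)"

lemma E_mix_pmf:
  "finite (set_pmf A) \<Longrightarrow> finite (set_pmf B) \<Longrightarrow> 0 \<le> \<alpha> \<Longrightarrow> \<alpha> \<le> 1 \<Longrightarrow>
    E (mix_pmf \<alpha> A B) f = \<alpha> * E A f + (1 - \<alpha>) * E B f"
  unfolding mix_pmf_def by (subst pmf_expectation_bind[where A=UNIV]) (auto simp: UNIV_bool)

lemma finite_set_mix_pmf:
  "finite (set_pmf A) \<Longrightarrow> finite (set_pmf B) \<Longrightarrow> finite (set_pmf (mix_pmf \<alpha> A B))"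
  unfolding mix_pmf_def by (rule finite_subset[of _ "set_pmf A \<union> set_pmf B"]) (auto split: if_splits)

definition mdp_edges :: "('s,'a) mdp \<Rightarrow> ('s \<times> 's) set" where
  "mdp_edges M = {(s, s'). s \<in> m_states M - m_term M \<and> (\<exists>a\<in>m_acts M s. s' \<in> set_pmf (m_trans M s a))}"

lemma is_mdpD:
  assumes "is_mdp M"
  shows "finite (m_states M)" "m_root M \<in> m_states M" "m_term M \<subseteq> m_states M"
    "\<And>s. s \<in> m_states M \<Longrightarrow> s \<notin> m_term M \<Longrightarrow> finite (m_acts M s)"
    "\<And>s. s \<in> m_states M \<Longrightarrow> s \<notin> m_term M \<Longrightarrow> m_acts M s \<noteq> {}"
    "\<And>s a. s \<in> m_states M \<Longrightarrow> s \<notin> m_term M \<Longrightarrow> a \<in> m_acts M s \<Longrightarrow> 0 \<le> m_cost M s a"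
    "\<And>s a. s \<in> m_states M \<Longrightarrow> s \<notin> m_term M \<Longrightarrow> a \<in> m_acts M s \<Longrightarrow> set_pmf (m_trans M s a) \<subseteq> m_states M"
  using assms unfolding is_mdp_def by blast+

lemma finite_set_m_trans:
  "is_mdp M \<Longrightarrow> s \<in> m_states M \<Longrightarrow> s \<notin> m_term M \<Longrightarrow> a \<in> m_acts M s \<Longrightarrow> finite (set_pmf (m_trans M s a))"
  using is_mdpD(1,7) finite_subset by metis

lemma mdp_edgesI:
  "s \<in> m_states M \<Longrightarrow> s \<notin> m_term M \<Longrightarrow> a \<in> m_acts M s \<Longrightarrow> s' \<in> set_pmf (m_trans M s a) \<Longrightarrow>
    (s, s') \<in> mdp_edges M"
  unfolding mdp_edges_def by auto

lemma wf_converse_mdp_edges: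
  assumes "is_mdp M"
  shows "wf ((mdp_edges M)\<inverse>)"
proof (rule finite_acyclic_wf_converse)
  have "mdp_edges M \<subseteq> m_states M \<times> m_states M"
    using is_mdpD(7)[OF assms] by (auto simp: mdp_edges_def)
  then show "finite (mdp_edges M)"
    using is_mdpD(1)[OF assms] by (blast intro: finite_subset)
  show "acyclic (mdp_edges M)"
    using assms unfolding is_mdp_def mdp_edges_def by blast
qed

lemma mdp_edges_induct:
  assumes "is_mdp M" and "\<And>s. (\<And>s'. (s, s') \<in> mdp_edges M \<Longrightarrow> P s') \<Longrightarrow> P s"
  shows "P s"
  using wf_converse_mdp_edges[OF assms(1)] by (induction s rule: wf_induct_rule) (use assms(2) in blast)

definition mdp_rec :: "('s,'a) mdp \<Rightarrow> (('s \<Rightarrow> 'b) \<Rightarrow> 's \<Rightarrow> 'b) \<Rightarrow> 's \<Rightarrow> 'b" where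
  "mdp_rec M H = wfrec ((mdp_edges M)\<inverse>) H"

lemma mdp_rec_unfold:
  assumes "is_mdp M"
    and "\<And>f g s. (\<And>s'. (s, s') \<in> mdp_edges M \<Longrightarrow> f s' = g s') \<Longrightarrow> H f s = H g s"
  shows "mdp_rec M H s = H (mdp_rec M H) s"
proof -
  have "adm_wf ((mdp_edges M)\<inverse>) H"
    using assms(2) unfolding adm_wf_def by blast
  from wfrec_fixpoint[OF wf_converse_mdp_edges[OF assms(1)] this] show ?thesis
    unfolding mdp_rec_def by (rule fun_cong)
qed

section \<open>The priced single-MDP problem and the Lagrangian bound\<close>

definition priced_bellman :: "('s,'a) mdp \<Rightarrow> real \<Rightarrow> ('s \<Rightarrow> real) \<Rightarrow> 's \<Rightarrow> real" where
  "priced_bellman M l f s =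
    (if s \<in> m_term M then max 0 (m_val M s - l)
     else if s \<in> m_states M then max 0 (Max ((\<lambda>a. E (m_trans M s a) f - m_cost M s a) ` m_acts M s))
     else 0)"

text \<open>The optimal utility of \<open>M\<close> alone, started in \<open>s\<close>, when selecting a terminal state costs
  the price \<open>l\<close> and stopping is free.\<close>
definition priced_value :: "('s,'a) mdp \<Rightarrow> real \<Rightarrow> 's \<Rightarrow> real" where
  "priced_value M l = mdp_rec M (priced_bellman M l)"

lemma priced_value_unfold:
  fixes M :: "('s,'a) mdp"
  assumes M: "is_mdp M"
  shows "priced_value M l s = priced_bellman M l (priced_value M l) s"
  unfolding priced_value_def
proof (rule mdp_rec_unfold[OF M])
  fix f g :: "'s \<Rightarrow> real" and s
  assume "\<And>s'. (s, s') \<in> mdp_edges M \<Longrightarrow> f s' = g s'"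
  then have "E (m_trans M s a) f = E (m_trans M s a) g"
    if "s \<in> m_states M" "s \<notin> m_term M" "a \<in> m_acts M s" for a
    using that by (intro E_cong) (auto intro: mdp_edgesI)
  then show "priced_bellman M l f s = priced_bellman M l g s"
    unfolding priced_bellman_def by (auto intro!: arg_cong[where f=Max] image_cong)
qed

lemma priced_value_nonneg: "is_mdp M \<Longrightarrow> 0 \<le> priced_value M l s"
  by (subst priced_value_unfold) (auto simp: priced_bellman_def)

lemma priced_value_term: "is_mdp M \<Longrightarrow> s \<in> m_term M \<Longrightarrow> priced_value M l s = max 0 (m_val M s - l)"
  by (subst priced_value_unfold) (auto simp: priced_bellman_def)

lemma priced_value_nonterm:
  "is_mdp M \<Longrightarrow> s \<in> m_states M \<Longrightarrow> s \<notin> m_term M \<Longrightarrow>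
    priced_value M l s = max 0 (Max ((\<lambda>a. E (m_trans M s a) (priced_value M l) - m_cost M s a) ` m_acts M s))"
  by (subst priced_value_unfold) (auto simp: priced_bellman_def)

lemma priced_value_ge_action:
  assumes M: "is_mdp M" and s: "s \<in> m_states M" "s \<notin> m_term M" and a: "a \<in> m_acts M s"
  shows "E (m_trans M s a) (priced_value M l) - m_cost M s a \<le> priced_value M l s"
  unfolding priced_value_nonterm[OF M s]
  using is_mdpD(4)[OF M s] a by (intro max.coboundedI2 Max_ge) auto

primrec sel_prob :: "('n \<Rightarrow> ('s,'a) mdp) \<Rightarrow> ('n \<Rightarrow> 's) \<Rightarrow> ('n,'a,'s) policy \<Rightarrow> 'n \<Rightarrow> real" where
  "sel_prob M c (Halt S) j = (if j \<in> S then 1 else 0)"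
| "sel_prob M c (Adv i p k) j =
     E p (\<lambda>a. E (m_trans (M i) (c i) a) (\<lambda>s'. sel_prob M (c(i := s')) (k a s') j))"

lemma valid_adv_finite:
  assumes M: "is_mdp (M i)" and c: "c i \<in> m_states (M i)" "c i \<notin> m_term (M i)"
    and p: "set_pmf p \<subseteq> m_acts (M i) (c i)"
  shows "finite (set_pmf p)"
    and "\<And>a. a \<in> set_pmf p \<Longrightarrow> finite (set_pmf (m_trans (M i) (c i) a))"
    and "\<And>a s'. a \<in> set_pmf p \<Longrightarrow> s' \<in> set_pmf (m_trans (M i) (c i) a) \<Longrightarrow> s' \<in> m_states (M i)"
  using is_mdpD(4,7)[OF M c] finite_set_m_trans[OF M c] p finite_subset by blast+

lemma sum_fun_upd:
  fixes f :: "'n::finite \<Rightarrow> 's \<Rightarrow> real"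
  shows "(\<Sum>j\<in>UNIV. f j ((c(i := s')) j)) = (\<Sum>j\<in>UNIV. f j (c j)) - f i (c i) + f i s'"
proof -
  have "(\<Sum>j\<in>UNIV. f j ((c(i := s')) j)) = f i s' + (\<Sum>j\<in>UNIV - {i}. f j (c j))"
    by (subst sum.remove[of _ i]) (auto intro!: sum.cong)
  also have "(\<Sum>j\<in>UNIV - {i}. f j (c j)) = (\<Sum>j\<in>UNIV. f j (c j)) - f i (c i)"
    by (subst sum.remove[of _ i]) auto
  finally show ?thesis by simp
qed

lemma util_le_lagrangian:
  fixes M :: "'n::finite \<Rightarrow> ('s,'a) mdp" and l :: "'n \<Rightarrow> real"
  assumes "valid_pol F M c t" and M: "\<forall>j. is_mdp (M j)" and "\<forall>j. c j \<in> m_states (M j)"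
  shows "util M c t \<le> (\<Sum>j\<in>UNIV. l j * sel_prob M c t j) + (\<Sum>j\<in>UNIV. priced_value (M j) (l j) (c j))"
  using assms(1,3)
proof (induction rule: valid_pol.induct)
  case (halt S c)
  have "util M c (Halt S) = (\<Sum>j\<in>S. l j) + (\<Sum>j\<in>S. m_val (M j) (c j) - l j)"
    by (simp add: sum.distrib[symmetric])
  also have "(\<Sum>j\<in>S. m_val (M j) (c j) - l j) \<le> (\<Sum>j\<in>S. priced_value (M j) (l j) (c j))"
    using halt M by (intro sum_mono) (simp add: priced_value_term)
  also have "\<dots> \<le> (\<Sum>j\<in>UNIV. priced_value (M j) (l j) (c j))"
    using M by (intro sum_mono2) (auto intro!: priced_value_nonneg)
  also have "(\<Sum>j\<in>S. l j) = (\<Sum>j\<in>UNIV. l j * sel_prob M c (Halt S) j)"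
    by (simp add: if_distrib sum.If_cases)
  finally show ?case by simp
next
  case (adv c i p k)
  let ?T = "m_trans (M i) (c i)" and ?W = "\<lambda>j. priced_value (M j) (l j)"
  let ?L = "\<lambda>a s'. \<Sum>j\<in>UNIV. l j * sel_prob M (c(i := s')) (k a s') j"
  let ?C = "(\<Sum>j\<in>UNIV. ?W j (c j)) - ?W i (c i)"
  have Mi: "is_mdp (M i)" and ci: "c i \<in> m_states (M i)" using M adv by auto
  note fin = valid_adv_finite[of M i c p, OF Mi ci adv(1,2)]
  have IH: "util M (c(i := s')) (k a s') \<le> ?L a s' + (?C + ?W i s')"
    if "a \<in> set_pmf p" "s' \<in> set_pmf (?T a)" for a s'
  proof -
    have "\<forall>j. (c(i := s')) j \<in> m_states (M j)" using adv(4) fin(3)[OF that] by auto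
    then have "util M (c(i := s')) (k a s') \<le> ?L a s' + (\<Sum>j\<in>UNIV. ?W j ((c(i := s')) j))"
      using adv(3) that by blast
    then show ?thesis using sum_fun_upd[of ?W c i s'] by simp
  qed
  have "util M c (Adv i p k) = E p (\<lambda>a. - m_cost (M i) (c i) a + E (?T a) (\<lambda>s'. util M (c(i := s')) (k a s')))"
    by simp
  also have "\<dots> \<le> E p (\<lambda>a. - m_cost (M i) (c i) a + E (?T a) (\<lambda>s'. ?L a s' + (?C + ?W i s')))"
    using fin IH by (intro E_mono add_left_mono) auto
  also have "\<dots> = E p (\<lambda>a. E (?T a) (\<lambda>s'. ?L a s') + ?C + (E (?T a) (?W i) - m_cost (M i) (c i) a))"
    using fin by (intro E_cong) (simp add: E_add)
  also have "\<dots> \<le> E p (\<lambda>a. E (?T a) (\<lambda>s'. ?L a s') + ?C + ?W i (c i))"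
    using fin adv(1,2) ci by (intro E_mono add_left_mono priced_value_ge_action Mi) auto
  also have "\<dots> = E p (\<lambda>a. E (?T a) (\<lambda>s'. ?L a s')) + (\<Sum>j\<in>UNIV. ?W j (c j))"
    using fin by (simp add: E_add)
  also have "E p (\<lambda>a. E (?T a) (\<lambda>s'. ?L a s')) = (\<Sum>j\<in>UNIV. l j * sel_prob M c (Adv i p k) j)"
    using fin by (simp add: E_sum cong: E_cong)
  finally show ?case .
qed

lemma expectation_vec_in_convex:
  fixes f :: "'x \<Rightarrow> 'n::finite \<Rightarrow> real"
  assumes C: "convex C" and fin: "finite (set_pmf p)"
    and f: "\<And>x. x \<in> set_pmf p \<Longrightarrow> (\<chi> j. f x j) \<in> C"
  shows "(\<chi> j. E p (\<lambda>x. f x j)) \<in> C"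
proof -
  have "(\<chi> j. E p (\<lambda>x. f x j)) = (\<Sum>x\<in>set_pmf p. pmf p x *\<^sub>R (\<chi> j. f x j))"
    by (simp add: vec_eq_iff E_as_sum[OF fin] sum_component mult.commute)
  also have "\<dots> \<in> C"
    using fin f by (intro convex_sum[OF fin C]) (auto simp: sum_pmf_eq_1)
  finally show ?thesis .
qed

lemma sel_prob_in_polytope:
  fixes M :: "'n::finite \<Rightarrow> ('s,'a) mdp"
  assumes "valid_pol F M c t" and M: "\<forall>j. is_mdp (M j)" and "\<forall>j. c j \<in> m_states (M j)"
  shows "(\<chi> j. sel_prob M c t j) \<in> polytope F"
  using assms(1,3)
proof (induction rule: valid_pol.induct)
  case (halt S c)
  have "(\<chi> j. sel_prob M c (Halt S) j) = indic_vec S" by (simp add: indic_vec_def)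
  then show ?case using halt unfolding polytope_def by (simp add: hull_inc)
next
  case (adv c i p k)
  have Mi: "is_mdp (M i)" and ci: "c i \<in> m_states (M i)" using M adv by auto
  note fin = valid_adv_finite[of M i c p, OF Mi ci adv(1,2)]
  have cvx: "convex (polytope F)" unfolding polytope_def by simp
  have "(\<chi> j. E (m_trans (M i) (c i) a) (\<lambda>s'. sel_prob M (c(i := s')) (k a s') j)) \<in> polytope F"
    if a: "a \<in> set_pmf p" for a
  proof (rule expectation_vec_in_convex[OF cvx fin(2)[OF a]])
    fix s' assume s': "s' \<in> set_pmf (m_trans (M i) (c i) a)"
    have "\<forall>j. (c(i := s')) j \<in> m_states (M j)" using adv(4) fin(3)[OF a s'] by auto
    then show "(\<chi> j. sel_prob M (c(i := s')) (k a s') j) \<in> polytope F" using adv(3) a s' by blast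
  qed
  then show ?case
    by (simp add: expectation_vec_in_convex[OF cvx fin(1)])
qed

lemma polytope_coord_bounds:
  fixes x :: "real ^ 'n::finite"
  assumes "x \<in> polytope F"
  shows "0 \<le> x $ j \<and> x $ j \<le> 1"
proof -
  have "convex {x :: real ^ 'n. 0 \<le> x $ j \<and> x $ j \<le> 1}"
    by (auto simp: convex_def intro: convex_bound_le add_nonneg_nonneg)
  moreover have "indic_vec ` F \<subseteq> {x :: real ^ 'n. 0 \<le> x $ j \<and> x $ j \<le> 1}"
    by (auto simp: indic_vec_def)
  ultimately have "polytope F \<subseteq> {x. 0 \<le> x $ j \<and> x $ j \<le> 1}"
    unfolding polytope_def by (intro hull_minimal)
  then show ?thesis using assms by blast
qed

section \<open>Excess over a level\<close>

definition excess :: "real pmf \<Rightarrow> real \<Rightarrow> real" where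
  "excess K l = E K (\<lambda>x. max 0 (x - l))"

lemma excess_nonneg: "0 \<le> excess K l"
  unfolding excess_def by (rule E_nonneg) simp

lemma excess_antimono: "finite (set_pmf K) \<Longrightarrow> l \<le> l' \<Longrightarrow> excess K l' \<le> excess K l"
  unfolding excess_def by (intro E_mono) auto

lemma excess_eq_0: "(\<And>x. x \<in> set_pmf K \<Longrightarrow> x \<le> l) \<Longrightarrow> excess K l = 0"
  unfolding excess_def by (subst E_cong[where g="\<lambda>_. 0"]) auto

lemma excess_below_support:
  assumes "finite (set_pmf K)" and "\<And>x. x \<in> set_pmf K \<Longrightarrow> L \<le> x" and "l \<le> L"
  shows "excess K l = excess K L + (L - l)"
proof -
  have "excess K l = E K (\<lambda>x. max 0 (x - L) + (L - l))"
    unfolding excess_def by (rule E_cong) (use assms in force)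
  then show ?thesis unfolding excess_def using assms(1) by (simp add: E_add)
qed

lemma tendsto_excess:
  assumes "finite (set_pmf K)" and "(f \<longlongrightarrow> a) F"
  shows "((\<lambda>y. excess K (f y)) \<longlongrightarrow> excess K a) F"
  unfolding excess_def E_as_sum[OF assms(1)] using assms(2) by (intro tendsto_intros)

lemma continuous_on_excess: "finite (set_pmf K) \<Longrightarrow> continuous_on A (excess K)"
  unfolding continuous_on_def by (auto intro: tendsto_excess tendsto_ident_at)

lemma excess_map_min:
  assumes fin: "finite (set_pmf K)" and g: "excess K g = c" and c: "0 < c"
  shows "excess (map_pmf (min g) K) l = max 0 (excess K l - c)"
proof (cases "l < g")
  case True
  have "excess (map_pmf (min g) K) l = E K (\<lambda>x. max 0 (x - l) - max 0 (x - g))"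
    unfolding excess_def integral_map_pmf by (rule E_cong) (use True in \<open>auto simp: min_def max_def\<close>)
  also have "\<dots> = excess K l - c" using fin g by (simp add: E_diff excess_def)
  finally show ?thesis using excess_antimono[OF fin, of l g] True g by simp
next
  case False
  have "excess (map_pmf (min g) K) l = 0"
    by (rule excess_eq_0) (use False in auto)
  then show ?thesis using excess_antimono[OF fin, of g l] False g by simp
qed

text \<open>For \<open>c \<le> 0\<close> this is the top of the support, so capping at it changes nothing.\<close>
definition excess_level :: "real pmf \<Rightarrow> real \<Rightarrow> real" where
  "excess_level K c = (if c \<le> 0 then Max (set_pmf K) else (SOME g. excess K g = c))"

lemma excess_excess_level:
  assumes fin: "finite (set_pmf K)" and c: "0 < c"
  shows "excess K (excess_level K c) = c"
proof -
  let ?a = "Min (set_pmf K) - c" and ?b = "Max (set_pmf K)"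
  have ne: "set_pmf K \<noteq> {}" by (rule set_pmf_not_empty)
  have "excess K ?b = 0" using fin ne by (intro excess_eq_0) auto
  moreover have "c \<le> excess K ?a"
  proof -
    have "c = E K (\<lambda>x. Min (set_pmf K) - ?a)" by simp
    also have "\<dots> \<le> E K (\<lambda>x. max 0 (x - ?a))"
      using fin by (intro E_mono) (simp_all add: le_max_iff_disj Min_le)
    finally show ?thesis unfolding excess_def .
  qed
  moreover have "?a \<le> ?b"
  proof -
    obtain y where y: "y \<in> set_pmf K" using ne by blast
    show ?thesis using Min_le[OF fin y] Max_ge[OF fin y] c by linarith
  qed
  ultimately have "\<exists>g. ?a \<le> g \<and> g \<le> ?b \<and> excess K g = c"
    using c continuous_on_excess[OF fin] by (intro IVT2') auto
  then have "excess K (SOME g. excess K g = c) = c" by (metis (mono_tags) someI_ex)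
  then show ?thesis unfolding excess_level_def using c by simp
qed

lemma excess_map_min_excess_level:
  assumes fin: "finite (set_pmf K)" and c: "0 \<le> c"
  shows "excess (map_pmf (min (excess_level K c)) K) l = max 0 (excess K l - c)"
proof (cases "c = 0")
  case True
  have "map_pmf (min (excess_level K c)) K = map_pmf id K"
    using True fin by (intro map_pmf_cong) (simp_all add: excess_level_def min_absorb2[OF Max_ge[OF fin]])
  then show ?thesis using True excess_nonneg by simp
next
  case False
  then show ?thesis using excess_map_min[OF fin excess_excess_level[OF fin]] c by simp
qed

lemma excess_min_excess_level:
  assumes fin: "finite (set_pmf K)" and c: "0 \<le> c"
  shows "excess K (min m (excess_level K c)) - c = max 0 (excess K m - c)"
proof (cases "c = 0")
  case True
  have zero: "excess K m' = 0" if "Max (set_pmf K) \<le> m'" for m'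
    using that fin by (intro excess_eq_0) (auto dest: Max_ge[OF fin])
  show ?thesis
    using True excess_nonneg[of K] zero[OF order_refl] zero[of m] by (auto simp: excess_level_def min_def)
next
  case False
  then have ge: "excess K (excess_level K c) = c" using excess_excess_level[OF fin] c by simp
  show ?thesis
    using excess_antimono[OF fin, of m "excess_level K c"] excess_antimono[OF fin, of "excess_level K c" m] ge
    by (auto simp: min_def)
qed

section \<open>Capped values of a deterministic commitment\<close>

definition det_commitments :: "('s,'a) mdp \<Rightarrow> ('s \<Rightarrow> 'a) set" where
  "det_commitments M = PiE (m_states M - m_term M) (m_acts M)"

text \<open>The cap at a non-terminal state \<open>s\<close> is the price at which paying for the committed action
  exactly breaks even against the capped value of the continuation. The capped value of \<open>M\<close> under
  \<open>\<sigma>\<close> is the terminal value reached, capped by the smallest cap met along the way.\<close>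
definition capped_step :: "('s,'a) mdp \<Rightarrow> ('s \<Rightarrow> 'a) \<Rightarrow> ('s \<Rightarrow> real pmf) \<Rightarrow> 's \<Rightarrow> real pmf" where
  "capped_step M \<sigma> f s =
    (if s \<in> m_term M then return_pmf (m_val M s)
     else if s \<in> m_states M then
       map_pmf (min (excess_level (bind_pmf (m_trans M s (\<sigma> s)) f) (m_cost M s (\<sigma> s))))
         (bind_pmf (m_trans M s (\<sigma> s)) f)
     else return_pmf 0)"

definition capped_value :: "('s,'a) mdp \<Rightarrow> ('s \<Rightarrow> 'a) \<Rightarrow> 's \<Rightarrow> real pmf" where
  "capped_value M \<sigma> = mdp_rec M (capped_step M \<sigma>)"

definition next_capped :: "('s,'a) mdp \<Rightarrow> ('s \<Rightarrow> 'a) \<Rightarrow> 's \<Rightarrow> real pmf" where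
  "next_capped M \<sigma> s = bind_pmf (m_trans M s (\<sigma> s)) (capped_value M \<sigma>)"

definition cap :: "('s,'a) mdp \<Rightarrow> ('s \<Rightarrow> 'a) \<Rightarrow> 's \<Rightarrow> real" where
  "cap M \<sigma> s = excess_level (next_capped M \<sigma> s) (m_cost M s (\<sigma> s))"

context
  fixes M :: "('s,'a) mdp" and \<sigma> :: "'s \<Rightarrow> 'a"
  assumes M: "is_mdp M" and \<sigma>: "\<sigma> \<in> det_commitments M"
begin

lemma det_commitment_act: "s \<in> m_states M \<Longrightarrow> s \<notin> m_term M \<Longrightarrow> \<sigma> s \<in> m_acts M s"
  using \<sigma> unfolding det_commitments_def by blast

lemma det_commitment_edge:
  "s \<in> m_states M \<Longrightarrow> s \<notin> m_term M \<Longrightarrow> s' \<in> set_pmf (m_trans M s (\<sigma> s)) \<Longrightarrow> (s, s') \<in> mdp_edges M"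
  using det_commitment_act by (blast intro: mdp_edgesI)

lemma det_commitment_trans_states:
  "s \<in> m_states M \<Longrightarrow> s \<notin> m_term M \<Longrightarrow> s' \<in> set_pmf (m_trans M s (\<sigma> s)) \<Longrightarrow> s' \<in> m_states M"
  using det_commitment_act is_mdpD(7)[OF M] by blast

lemma det_commitment_trans_finite:
  "s \<in> m_states M \<Longrightarrow> s \<notin> m_term M \<Longrightarrow> finite (set_pmf (m_trans M s (\<sigma> s)))"
  using det_commitment_act finite_set_m_trans[OF M] by blast

lemma det_commitment_cost: "s \<in> m_states M \<Longrightarrow> s \<notin> m_term M \<Longrightarrow> 0 \<le> m_cost M s (\<sigma> s)"
  using det_commitment_act is_mdpD(6)[OF M] by blast

lemma capped_value_unfold: "capped_value M \<sigma> s = capped_step M \<sigma> (capped_value M \<sigma>) s"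
  unfolding capped_value_def
proof (rule mdp_rec_unfold[OF M])
  fix f g :: "'s \<Rightarrow> real pmf" and s
  assume "\<And>s'. (s, s') \<in> mdp_edges M \<Longrightarrow> f s' = g s'"
  then have "s \<in> m_states M \<Longrightarrow> s \<notin> m_term M \<Longrightarrow>
      bind_pmf (m_trans M s (\<sigma> s)) f = bind_pmf (m_trans M s (\<sigma> s)) g"
    using det_commitment_edge by (intro bind_pmf_cong) auto
  then show "capped_step M \<sigma> f s = capped_step M \<sigma> g s"
    unfolding capped_step_def by simp
qed

lemma capped_value_nonterm:
  "s \<in> m_states M \<Longrightarrow> s \<notin> m_term M \<Longrightarrow> capped_value M \<sigma> s = map_pmf (min (cap M \<sigma> s)) (next_capped M \<sigma> s)"
  by (subst capped_value_unfold) (simp add: capped_step_def cap_def next_capped_def)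

lemma capped_value_term: "s \<in> m_term M \<Longrightarrow> capped_value M \<sigma> s = return_pmf (m_val M s)"
  by (subst capped_value_unfold) (simp add: capped_step_def)

lemma finite_capped_value: "finite (set_pmf (capped_value M \<sigma> s))"
proof (induction s rule: mdp_edges_induct[OF M, case_names step])
  case (step s)
  consider "s \<in> m_term M" | "s \<in> m_states M - m_term M" | "s \<notin> m_states M" "s \<notin> m_term M"
    by blast
  then show ?case
  proof cases
    case 2
    then show ?thesis
      using det_commitment_trans_finite step det_commitment_edge
      by (simp add: capped_value_nonterm next_capped_def)
  qed (simp_all add: capped_value_term, subst capped_value_unfold, simp add: capped_step_def)
qed

lemma finite_next_capped: "s \<in> m_states M \<Longrightarrow> s \<notin> m_term M \<Longrightarrow> finite (set_pmf (next_capped M \<sigma> s))"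
  unfolding next_capped_def using det_commitment_trans_finite finite_capped_value by simp

lemma E_next_capped: "s \<in> m_states M \<Longrightarrow> s \<notin> m_term M \<Longrightarrow>
    E (next_capped M \<sigma> s) f = E (m_trans M s (\<sigma> s)) (\<lambda>s'. E (capped_value M \<sigma> s') f)"
  unfolding next_capped_def using det_commitment_trans_finite finite_capped_value by (intro E_bind) auto

lemma excess_capped_value_nonterm: "s \<in> m_states M \<Longrightarrow> s \<notin> m_term M \<Longrightarrow>
    excess (capped_value M \<sigma> s) l = max 0 (excess (next_capped M \<sigma> s) l - m_cost M s (\<sigma> s))"
  unfolding capped_value_nonterm cap_def
  by (rule excess_map_min_excess_level[OF finite_next_capped det_commitment_cost])

lemma excess_next_capped: "s \<in> m_states M \<Longrightarrow> s \<notin> m_term M \<Longrightarrow>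
    excess (next_capped M \<sigma> s) l = E (m_trans M s (\<sigma> s)) (\<lambda>s'. excess (capped_value M \<sigma> s') l)"
  unfolding excess_def by (rule E_next_capped)

lemma excess_capped_value_term: "s \<in> m_term M \<Longrightarrow> excess (capped_value M \<sigma> s) l = max 0 (m_val M s - l)"
  by (simp add: capped_value_term excess_def)

lemma excess_capped_value_le_priced_value:
  "s \<in> m_states M \<Longrightarrow> excess (capped_value M \<sigma> s) l \<le> priced_value M l s"
proof (induction s rule: mdp_edges_induct[OF M, case_names step])
  case (step s)
  show ?case
  proof (cases "s \<in> m_term M")
    case True
    then show ?thesis by (simp add: excess_capped_value_term priced_value_term[OF M])
  next
    case False
    let ?T = "m_trans M s (\<sigma> s)"
    have "excess (capped_value M \<sigma> s) l = max 0 (E ?T (\<lambda>s'. excess (capped_value M \<sigma> s') l) - m_cost M s (\<sigma> s))"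
      using step.prems False by (simp add: excess_capped_value_nonterm excess_next_capped)
    also have "\<dots> \<le> max 0 (E ?T (priced_value M l) - m_cost M s (\<sigma> s))"
      using step False det_commitment_trans_finite det_commitment_edge det_commitment_trans_states
      by (intro max.mono diff_right_mono E_mono) auto
    also have "\<dots> \<le> priced_value M l s"
      using priced_value_ge_action[OF M step.prems False det_commitment_act[OF step.prems False], of l]
        priced_value_nonneg[OF M, of l s] by simp
    finally show ?thesis .
  qed
qed

end

definition greedy_commitment :: "('s,'a) mdp \<Rightarrow> real \<Rightarrow> 's \<Rightarrow> 'a" where
  "greedy_commitment M l = (\<lambda>s. if s \<in> m_states M - m_term M
     then arg_max_on (\<lambda>a. E (m_trans M s a) (priced_value M l) - m_cost M s a) (m_acts M s)
     else undefined)"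

lemma greedy_commitment_maximal:
  fixes l :: real
  assumes M: "is_mdp M" and s: "s \<in> m_states M" "s \<notin> m_term M"
  defines "f \<equiv> \<lambda>a. E (m_trans M s a) (priced_value M l) - m_cost M s a"
  shows "greedy_commitment M l s \<in> m_acts M s \<and> f (greedy_commitment M l s) = Max (f ` m_acts M s)"
proof -
  have fin: "finite (m_acts M s)" and ne: "m_acts M s \<noteq> {}" using is_mdpD(4,5)[OF M s] by auto
  have "Max (f ` m_acts M s) \<in> f ` m_acts M s" using fin ne by (intro Max_in) auto
  then obtain a where a: "a \<in> m_acts M s" "f a = Max (f ` m_acts M s)" by auto
  have "arg_max_on f (m_acts M s) \<in> m_acts M s \<and> f (arg_max_on f (m_acts M s)) = Max (f ` m_acts M s)"
    unfolding arg_max_on_def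
  proof (rule arg_maxI[of _ a])
    show "\<And>y. y \<in> m_acts M s \<Longrightarrow> \<not> f a < f y" using a fin by (simp add: not_less)
    show "\<And>x. x \<in> m_acts M s \<Longrightarrow> \<forall>y. y \<in> m_acts M s \<longrightarrow> \<not> f x < f y \<Longrightarrow>
        x \<in> m_acts M s \<and> f x = Max (f ` m_acts M s)"
      using a fin by (metis Max_ge antisym finite_imageI image_eqI not_le)
  qed (use a in simp)
  then show ?thesis using s unfolding greedy_commitment_def f_def by simp
qed

lemma greedy_commitment_in:
  assumes M: "is_mdp M"
  shows "greedy_commitment M l \<in> det_commitments M"
proof -
  have "greedy_commitment M l s \<in> m_acts M s" if "s \<in> m_states M - m_term M" for s
    using greedy_commitment_maximal[OF M] that by blast
  moreover have "greedy_commitment M l s = undefined" if "s \<notin> m_states M - m_term M" for s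
    using that by (auto simp: greedy_commitment_def)
  ultimately show ?thesis unfolding det_commitments_def PiE_def extensional_def by auto
qed

lemma excess_capped_value_greedy:
  assumes M: "is_mdp M"
  shows "s \<in> m_states M \<Longrightarrow> excess (capped_value M (greedy_commitment M l) s) l = priced_value M l s"
proof (induction s rule: mdp_edges_induct[OF M, case_names step])
  case (step s)
  let ?\<sigma> = "greedy_commitment M l"
  note \<sigma> = greedy_commitment_in[OF M, of l]
  show ?case
  proof (cases "s \<in> m_term M")
    case True
    then show ?thesis by (simp add: excess_capped_value_term[OF M \<sigma>] priced_value_term[OF M])
  next
    case False
    let ?a = "?\<sigma> s"
    have "E (m_trans M s ?a) (\<lambda>s'. excess (capped_value M ?\<sigma> s') l) = E (m_trans M s ?a) (priced_value M l)"
      using step det_commitment_edge[OF M \<sigma> step.prems False] det_commitment_trans_states[OF M \<sigma> step.prems False]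
      by (intro E_cong) auto
    then show ?thesis
      using greedy_commitment_maximal[OF M step.prems False, of l] step.prems False
      by (simp add: excess_capped_value_nonterm[OF M \<sigma>] excess_next_capped[OF M \<sigma>] priced_value_nonterm[OF M])
  qed
qed

lemma finite_det_commitments: "is_mdp M \<Longrightarrow> finite (det_commitments M)"
  unfolding det_commitments_def by (intro finite_PiE) (auto dest: is_mdpD(1,4))

lemma priced_value_eq_Max_excess:
  assumes M: "is_mdp M" and s: "s \<in> m_states M"
  shows "priced_value M l s = Max ((\<lambda>\<sigma>. excess (capped_value M \<sigma> s) l) ` det_commitments M)"
proof (rule Max_eqI[symmetric])
  show "finite ((\<lambda>\<sigma>. excess (capped_value M \<sigma> s) l) ` det_commitments M)"
    using finite_det_commitments[OF M] by simp
  show "\<And>y. y \<in> (\<lambda>\<sigma>. excess (capped_value M \<sigma> s) l) ` det_commitments M \<Longrightarrow> y \<le> priced_value M l s"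
    using excess_capped_value_le_priced_value[OF M _ s] by auto
  show "priced_value M l s \<in> (\<lambda>\<sigma>. excess (capped_value M \<sigma> s) l) ` det_commitments M"
    using excess_capped_value_greedy[OF M s, of l] greedy_commitment_in[OF M, of l] by force
qed

section \<open>Choosing the price and the mixture\<close>

definition prob_gt :: "real pmf \<Rightarrow> real \<Rightarrow> real" where
  "prob_gt K l = E K (\<lambda>x. if l < x then 1 else 0)"

definition prob_ge :: "real pmf \<Rightarrow> real \<Rightarrow> real" where
  "prob_ge K l = E K (\<lambda>x. if l \<le> x then 1 else 0)"

definition upper_quantile :: "real pmf \<Rightarrow> real \<Rightarrow> real \<Rightarrow> bool" where
  "upper_quantile K q l \<longleftrightarrow> prob_gt K l \<le> q \<and> q \<le> prob_ge K l"

lemma eventually_support_gap: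
  fixes K :: "real pmf" and l :: real
  assumes "finite (set_pmf K)"
  shows "\<forall>\<^sub>F h in at_right 0. 0 < h \<and> (\<forall>x\<in>set_pmf K. x = l \<or> l + h \<le> x \<or> x \<le> l - h)"
proof -
  have "\<forall>\<^sub>F h in at_right 0. x = l \<or> l + h \<le> x \<or> x \<le> l - h" for x :: real
  proof (cases "x = l")
    case False
    then show ?thesis unfolding eventually_at_right_field
      by (intro exI[of _ "\<bar>x - l\<bar>"]) auto
  qed simp
  moreover have "\<forall>\<^sub>F h in at_right 0. 0 < (h::real)"
    unfolding eventually_at_right_field by (intro exI[of _ 1]) auto
  ultimately show ?thesis
    using assms by (intro eventually_conj eventually_ball_finite) auto
qed

lemma eventually_excess_right:
  fixes l :: real
  assumes fin: "finite (set_pmf K)"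
  shows "\<forall>\<^sub>F h in at_right 0. 0 < h \<and> excess K (l + h) = excess K l - h * prob_gt K l"
proof (rule eventually_mono[OF eventually_support_gap[OF fin, of l]], safe)
  fix h :: real
  assume "0 < h" and gap: "\<forall>x\<in>set_pmf K. x = l \<or> l + h \<le> x \<or> x \<le> l - h"
  then have "excess K (l + h) = E K (\<lambda>x. max 0 (x - l) - h * (if l < x then 1 else 0))"
    unfolding excess_def by (intro E_cong) (force simp: max_def)
  then show "excess K (l + h) = excess K l - h * prob_gt K l"
    unfolding excess_def prob_gt_def using fin by (simp add: E_diff)
qed

lemma eventually_excess_left:
  fixes l :: real
  assumes fin: "finite (set_pmf K)"
  shows "\<forall>\<^sub>F h in at_right 0. 0 < h \<and> excess K (l - h) = excess K l + h * prob_ge K l"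
proof (rule eventually_mono[OF eventually_support_gap[OF fin, of l]], safe)
  fix h :: real
  assume "0 < h" and gap: "\<forall>x\<in>set_pmf K. x = l \<or> l + h \<le> x \<or> x \<le> l - h"
  then have "excess K (l - h) = E K (\<lambda>x. max 0 (x - l) + h * (if l \<le> x then 1 else 0))"
    unfolding excess_def by (intro E_cong) (force simp: max_def)
  then show "excess K (l - h) = excess K l + h * prob_ge K l"
    unfolding excess_def prob_ge_def using fin by (simp add: E_add)
qed

definition max_excess :: "('x \<Rightarrow> real pmf) \<Rightarrow> 'x set \<Rightarrow> real \<Rightarrow> real" where
  "max_excess K P l = Max ((\<lambda>\<sigma>. excess (K \<sigma>) l) ` P)"

context
  fixes K :: "'x \<Rightarrow> real pmf" and P :: "'x set"
  assumes P: "finite P" "P \<noteq> {}" and fin: "\<And>\<sigma>. \<sigma> \<in> P \<Longrightarrow> finite (set_pmf (K \<sigma>))"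
begin

lemma max_excess_ge: "\<sigma> \<in> P \<Longrightarrow> excess (K \<sigma>) l \<le> max_excess K P l"
  unfolding max_excess_def using P by (intro Max_ge) auto

lemma max_excess_attained: "\<exists>\<sigma>\<in>P. max_excess K P l = excess (K \<sigma>) l"
proof -
  have "max_excess K P l \<in> (\<lambda>\<sigma>. excess (K \<sigma>) l) ` P"
    unfolding max_excess_def using P by (intro Max_in) auto
  then show ?thesis by blast
qed

lemma continuous_on_max_excess: "continuous_on A (max_excess K P)"
  unfolding max_excess_def using P fin
proof (induction P rule: finite_ne_induct)
  case (singleton \<sigma>)
  then show ?case by (simp add: continuous_on_excess)
next
  case (insert \<sigma> P)
  have "(\<lambda>l. Max ((\<lambda>\<sigma>. excess (K \<sigma>) l) ` insert \<sigma> P)) = (\<lambda>l. max (excess (K \<sigma>) l) (Max ((\<lambda>\<sigma>. excess (K \<sigma>) l) ` P)))"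
    using insert by (simp add: Max_insert)
  then show ?case using insert by (simp add: continuous_on_max continuous_on_excess)
qed

lemma max_excess_below_support:
  assumes lo: "\<And>\<sigma> x. \<sigma> \<in> P \<Longrightarrow> x \<in> set_pmf (K \<sigma>) \<Longrightarrow> lo \<le> x" and l: "l \<le> lo"
  shows "max_excess K P l = max_excess K P lo + (lo - l)"
proof -
  have "excess (K \<sigma>) l = excess (K \<sigma>) lo + (lo - l)" if "\<sigma> \<in> P" for \<sigma>
    using that lo l fin by (intro excess_below_support) auto
  then show ?thesis
    unfolding max_excess_def using Max_add_commute[OF P, of "\<lambda>\<sigma>. excess (K \<sigma>) lo" "lo - l"] by simp
qed

lemma max_excess_above_support:
  assumes hi: "\<And>\<sigma> x. \<sigma> \<in> P \<Longrightarrow> x \<in> set_pmf (K \<sigma>) \<Longrightarrow> x \<le> hi" and l: "hi \<le> l"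
  shows "max_excess K P l = 0"
proof -
  have "excess (K \<sigma>) l = 0" if "\<sigma> \<in> P" for \<sigma>
    using that hi l by (intro excess_eq_0) force
  then show ?thesis using max_excess_attained[of l] by auto
qed

lemma lagrangian_min_exists:
  assumes q: "0 \<le> q" "q \<le> 1"
  shows "\<exists>l0. \<forall>l. l0 * q + max_excess K P l0 \<le> l * q + max_excess K P l"
proof -
  define \<phi> where "\<phi> l = l * q + max_excess K P l" for l
  define U where "U = (\<Union>\<sigma>\<in>P. set_pmf (K \<sigma>))"
  have finU: "finite U" unfolding U_def using P(1) fin by (intro finite_UN_I)
  obtain u where u: "u \<in> U"
  proof -
    obtain \<sigma> where "\<sigma> \<in> P" using P(2) by blast
    moreover obtain u where "u \<in> set_pmf (K \<sigma>)" by (meson ex_in_conv set_pmf_not_empty)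
    ultimately show thesis using that unfolding U_def by blast
  qed
  define lo where "lo = Min U"
  define hi where "hi = Max U"
  have lo: "\<And>\<sigma> x. \<sigma> \<in> P \<Longrightarrow> x \<in> set_pmf (K \<sigma>) \<Longrightarrow> lo \<le> x"
    unfolding lo_def using finU by (intro Min_le) (auto simp: U_def)
  have hi: "\<And>\<sigma> x. \<sigma> \<in> P \<Longrightarrow> x \<in> set_pmf (K \<sigma>) \<Longrightarrow> x \<le> hi"
    unfolding hi_def using finU by (intro Max_ge) (auto simp: U_def)
  have "lo \<le> hi" using u unfolding U_def using lo hi by (blast intro: order.trans)
  moreover have "continuous_on {lo..hi} \<phi>"
    unfolding \<phi>_def by (intro continuous_intros continuous_on_max_excess)
  ultimately have "\<exists>l0\<in>{lo..hi}. \<forall>l\<in>{lo..hi}. \<phi> l0 \<le> \<phi> l"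
    by (intro continuous_attains_inf[OF compact_Icc]) auto
  then obtain l0 where l0: "\<And>l. l \<in> {lo..hi} \<Longrightarrow> \<phi> l0 \<le> \<phi> l" by blast
  \<comment> \<open>Outside \<open>[lo, hi]\<close> the objective is monotone, as \<open>0 \<le> q \<le> 1\<close>.\<close>
  have "\<phi> l0 \<le> \<phi> l" for l
  proof -
    consider "l < lo" | "l \<in> {lo..hi}" | "hi < l" by fastforce
    then show ?thesis
    proof cases
      case 1
      have "max_excess K P l = max_excess K P lo + (lo - l)"
        using lo 1 by (intro max_excess_below_support) auto
      then have "\<phi> lo \<le> \<phi> l"
        using 1 q mult_left_le[of q "lo - l"] unfolding \<phi>_def by (simp add: algebra_simps)
      then show ?thesis using l0[of lo] \<open>lo \<le> hi\<close> by simp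
    next
      case 3
      have "max_excess K P l' = 0" if "hi \<le> l'" for l'
        using hi that by (intro max_excess_above_support) auto
      then have "\<phi> hi \<le> \<phi> l" using 3 q unfolding \<phi>_def by (simp add: mult_right_mono)
      then show ?thesis using l0[of hi] \<open>lo \<le> hi\<close> by simp
    qed (rule l0)
  qed
  then show ?thesis unfolding \<phi>_def by blast
qed

text \<open>First-order conditions at a minimiser \<open>l0\<close>: the one-sided derivatives of \<open>max_excess\<close> at
  \<open>l0\<close> are those of its maximisers, namely minus their mass above, resp. at or above, \<open>l0\<close>.\<close>
lemma lagrangian_min_right:
  assumes min: "\<And>l. l0 * q + max_excess K P l0 \<le> l * q + max_excess K P l"
  shows "\<exists>\<sigma>\<in>P. excess (K \<sigma>) l0 = max_excess K P l0 \<and> prob_gt (K \<sigma>) l0 \<le> q"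
proof (rule ccontr)
  assume "\<not> ?thesis"
  then have gt: "\<And>\<sigma>. \<sigma> \<in> P \<Longrightarrow> excess (K \<sigma>) l0 = max_excess K P l0 \<Longrightarrow> q < prob_gt (K \<sigma>) l0"
    by force
  have "\<forall>\<^sub>F h in at_right 0. \<forall>\<sigma>\<in>P. excess (K \<sigma>) (l0 + h) + h * q < max_excess K P l0"
  proof (intro eventually_ball_finite[OF P(1)] ballI)
    fix \<sigma> assume \<sigma>: "\<sigma> \<in> P"
    show "\<forall>\<^sub>F h in at_right 0. excess (K \<sigma>) (l0 + h) + h * q < max_excess K P l0"
    proof (cases "excess (K \<sigma>) l0 = max_excess K P l0")
      case True
      have step: "h * q < h * prob_gt (K \<sigma>) l0" if "0 < h" for h
        using gt[OF \<sigma> True] that by simp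
      show ?thesis
        using eventually_excess_right[OF fin[OF \<sigma>], of l0]
        by (rule eventually_mono) (use step in \<open>auto simp: True\<close>)
    next
      case False
      have "((\<lambda>h. excess (K \<sigma>) (l0 + h) + h * q) \<longlongrightarrow> excess (K \<sigma>) (l0 + 0) + 0 * q) (at_right 0)"
        by (intro tendsto_intros tendsto_excess[OF fin[OF \<sigma>]])
      moreover have "excess (K \<sigma>) l0 < max_excess K P l0"
        using False max_excess_ge[OF \<sigma>, of l0] by simp
      ultimately show ?thesis by (intro order_tendstoD(2)) simp_all
    qed
  qed
  then have "\<forall>\<^sub>F h in at_right 0. (l0 + h) * q + max_excess K P (l0 + h) < l0 * q + max_excess K P l0"
  proof (rule eventually_mono)
    fix h assume "\<forall>\<sigma>\<in>P. excess (K \<sigma>) (l0 + h) + h * q < max_excess K P l0"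
    moreover obtain \<sigma> where "\<sigma> \<in> P" "max_excess K P (l0 + h) = excess (K \<sigma>) (l0 + h)"
      using max_excess_attained by blast
    ultimately show "(l0 + h) * q + max_excess K P (l0 + h) < l0 * q + max_excess K P l0"
      by (simp add: algebra_simps)
  qed
  then obtain h where "(l0 + h) * q + max_excess K P (l0 + h) < l0 * q + max_excess K P l0"
    using eventually_happens'[of "at_right (0::real)"] by auto
  then show False using min[of "l0 + h"] by simp
qed

lemma lagrangian_min_left:
  assumes min: "\<And>l. l0 * q + max_excess K P l0 \<le> l * q + max_excess K P l"
  shows "\<exists>\<sigma>\<in>P. excess (K \<sigma>) l0 = max_excess K P l0 \<and> q \<le> prob_ge (K \<sigma>) l0"
proof (rule ccontr)
  assume "\<not> ?thesis"
  then have lt: "\<And>\<sigma>. \<sigma> \<in> P \<Longrightarrow> excess (K \<sigma>) l0 = max_excess K P l0 \<Longrightarrow> prob_ge (K \<sigma>) l0 < q"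
    by force
  have "\<forall>\<^sub>F h in at_right 0. \<forall>\<sigma>\<in>P. excess (K \<sigma>) (l0 - h) - h * q < max_excess K P l0"
  proof (intro eventually_ball_finite[OF P(1)] ballI)
    fix \<sigma> assume \<sigma>: "\<sigma> \<in> P"
    show "\<forall>\<^sub>F h in at_right 0. excess (K \<sigma>) (l0 - h) - h * q < max_excess K P l0"
    proof (cases "excess (K \<sigma>) l0 = max_excess K P l0")
      case True
      have step: "h * prob_ge (K \<sigma>) l0 < h * q" if "0 < h" for h
        using lt[OF \<sigma> True] that by simp
      show ?thesis
        using eventually_excess_left[OF fin[OF \<sigma>], of l0]
        by (rule eventually_mono) (use step in \<open>auto simp: True\<close>)
    next
      case False
      have "((\<lambda>h. excess (K \<sigma>) (l0 - h) - h * q) \<longlongrightarrow> excess (K \<sigma>) (l0 - 0) - 0 * q) (at_right 0)"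
        by (intro tendsto_intros tendsto_excess[OF fin[OF \<sigma>]])
      moreover have "excess (K \<sigma>) l0 < max_excess K P l0"
        using False max_excess_ge[OF \<sigma>, of l0] by simp
      ultimately show ?thesis by (intro order_tendstoD(2)) simp_all
    qed
  qed
  then have "\<forall>\<^sub>F h in at_right 0. (l0 - h) * q + max_excess K P (l0 - h) < l0 * q + max_excess K P l0"
  proof (rule eventually_mono)
    fix h assume "\<forall>\<sigma>\<in>P. excess (K \<sigma>) (l0 - h) - h * q < max_excess K P l0"
    moreover obtain \<sigma> where "\<sigma> \<in> P" "max_excess K P (l0 - h) = excess (K \<sigma>) (l0 - h)"
      using max_excess_attained by blast
    ultimately show "(l0 - h) * q + max_excess K P (l0 - h) < l0 * q + max_excess K P l0"
      by (simp add: algebra_simps)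
  qed
  then obtain h where "(l0 - h) * q + max_excess K P (l0 - h) < l0 * q + max_excess K P l0"
    using eventually_happens'[of "at_right (0::real)"] by auto
  then show False using min[of "l0 - h"] by simp
qed

end

lemma upper_quantile_mix_pmf:
  assumes fA: "finite (set_pmf A)" and fB: "finite (set_pmf B)"
    and A: "prob_gt A l \<le> q" and B: "q \<le> prob_ge B l"
  shows "\<exists>\<alpha>\<in>{0..1}. upper_quantile (mix_pmf \<alpha> A B) q l"
proof (cases "q \<le> prob_ge A l")
  case True
  have "E (mix_pmf 1 A B) f = E A f" for f using E_mix_pmf[OF fA fB, of 1] by simp
  then show ?thesis using A True unfolding upper_quantile_def prob_gt_def prob_ge_def
    by (intro bexI[of _ 1]) auto
next
  case False
  define \<alpha> where "\<alpha> = (prob_ge B l - q) / (prob_ge B l - prob_ge A l)"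
  have den: "0 < prob_ge B l - prob_ge A l" using False B by simp
  then have \<alpha>: "0 \<le> \<alpha>" "\<alpha> \<le> 1" unfolding \<alpha>_def using B False by auto
  have "prob_ge (mix_pmf \<alpha> A B) l = \<alpha> * prob_ge A l + (1 - \<alpha>) * prob_ge B l"
    unfolding prob_ge_def by (rule E_mix_pmf[OF fA fB \<alpha>])
  also have "\<dots> = q"
  proof -
    have "\<alpha> * (prob_ge B l - prob_ge A l) = prob_ge B l - q" unfolding \<alpha>_def using den by simp
    then show ?thesis by (simp add: algebra_simps)
  qed
  finally have "prob_ge (mix_pmf \<alpha> A B) l = q" .
  moreover have "prob_gt (mix_pmf \<alpha> A B) l \<le> prob_ge (mix_pmf \<alpha> A B) l"
    unfolding prob_gt_def prob_ge_def using finite_set_mix_pmf[OF fA fB] by (intro E_mono) auto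
  ultimately show ?thesis using \<alpha> unfolding upper_quantile_def by auto
qed

lemma exists_optimal_mixture_quantile:
  fixes K :: "'x \<Rightarrow> real pmf"
  assumes P: "finite P" "P \<noteq> {}" and fin: "\<And>\<sigma>. \<sigma> \<in> P \<Longrightarrow> finite (set_pmf (K \<sigma>))"
    and q: "0 \<le> q" "q \<le> 1"
  shows "\<exists>l \<sigma>1 \<sigma>2 \<alpha>. \<sigma>1 \<in> P \<and> \<sigma>2 \<in> P \<and> \<alpha> \<in> {0..1} \<and>
    excess (mix_pmf \<alpha> (K \<sigma>1) (K \<sigma>2)) l = max_excess K P l \<and> upper_quantile (mix_pmf \<alpha> (K \<sigma>1) (K \<sigma>2)) q l"
proof -
  obtain l where min: "\<And>l'. l * q + max_excess K P l \<le> l' * q + max_excess K P l'"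
    using lagrangian_min_exists[where K=K and P=P, OF P fin q] by blast
  obtain \<sigma>1 where \<sigma>1: "\<sigma>1 \<in> P" "excess (K \<sigma>1) l = max_excess K P l" "prob_gt (K \<sigma>1) l \<le> q"
    using lagrangian_min_right[where K=K and P=P, OF P fin min] by blast
  obtain \<sigma>2 where \<sigma>2: "\<sigma>2 \<in> P" "excess (K \<sigma>2) l = max_excess K P l" "q \<le> prob_ge (K \<sigma>2) l"
    using lagrangian_min_left[where K=K and P=P, OF P fin min] by blast
  obtain \<alpha> where \<alpha>: "\<alpha> \<in> {0..1}" "upper_quantile (mix_pmf \<alpha> (K \<sigma>1) (K \<sigma>2)) q l"
    using upper_quantile_mix_pmf[OF fin[OF \<sigma>1(1)] fin[OF \<sigma>2(1)] \<sigma>1(3) \<sigma>2(3)] by blast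
  have "excess (mix_pmf \<alpha> (K \<sigma>1) (K \<sigma>2)) l = \<alpha> * excess (K \<sigma>1) l + (1 - \<alpha>) * excess (K \<sigma>2) l"
    unfolding excess_def using \<alpha>(1) by (intro E_mix_pmf fin \<sigma>1(1) \<sigma>2(1)) auto
  also have "\<dots> = max_excess K P l" using \<sigma>1(2) \<sigma>2(2) by (simp add: algebra_simps)
  finally show ?thesis using \<sigma>1(1) \<sigma>2(1) \<alpha> by blast
qed

section \<open>The ex ante side\<close>

definition pmf_borel :: "real pmf \<Rightarrow> real measure" where
  "pmf_borel K = distr (measure_pmf K) borel (\<lambda>x. x)"

lemma prob_space_pmf_borel: "prob_space (pmf_borel K)"
  unfolding pmf_borel_def by (rule prob_space.prob_space_distr) (simp_all add: prob_space_measure_pmf)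

lemma sets_pmf_borel [simp]: "sets (pmf_borel K) = sets borel"
  unfolding pmf_borel_def by simp

lemma integral_pmf_borel: "f \<in> borel_measurable borel \<Longrightarrow> integral\<^sup>L (pmf_borel K) f = E K f"
  unfolding pmf_borel_def by (rule integral_distr) simp

lemma integrable_pmf_borel:
  fixes f :: "real \<Rightarrow> real"
  shows "finite (set_pmf K) \<Longrightarrow> f \<in> borel_measurable borel \<Longrightarrow> integrable (pmf_borel K) f"
  unfolding pmf_borel_def by (subst integrable_distr_eq) (auto intro: integrable_measure_pmf_finite)

lemma borel_measurable_if_integrable_pmf_borel:
  fixes f :: "real \<Rightarrow> real"
  shows "integrable (pmf_borel K) f \<Longrightarrow> f \<in> borel_measurable borel"
  using borel_measurable_integrable measurable_cong_sets[OF sets_pmf_borel refl] by blast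

lemma upper_quantile_exists:
  assumes fin: "finite (set_pmf K)" and q: "0 \<le> q" "q \<le> 1"
  shows "\<exists>l. upper_quantile K q l"
proof -
  define S where "S = {x \<in> set_pmf K. q \<le> prob_ge K x}"
  have finS: "finite S" unfolding S_def using fin by simp
  have ne: "set_pmf K \<noteq> {}" by (rule set_pmf_not_empty)
  have "prob_ge K (Min (set_pmf K)) = 1"
    unfolding prob_ge_def using fin by (subst E_cong[where g="\<lambda>_. 1"]) auto
  then have "Min (set_pmf K) \<in> S" unfolding S_def using fin ne q by simp
  then have "S \<noteq> {}" by blast
  define l where "l = Max S"
  have "l \<in> S" unfolding l_def using finS \<open>S \<noteq> {}\<close> by simp
  then have ge: "q \<le> prob_ge K l" unfolding S_def by simp
  have "prob_gt K l \<le> q"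
  proof (rule ccontr)
    assume big: "\<not> prob_gt K l \<le> q"
    define Y where "Y = {y \<in> set_pmf K. l < y}"
    have finY: "finite Y" unfolding Y_def using fin by simp
    have "Y \<noteq> {}"
    proof
      assume "Y = {}"
      then have "prob_gt K l = 0" unfolding prob_gt_def by (subst E_cong[where g="\<lambda>_. 0"]) (auto simp: Y_def)
      then show False using big q by simp
    qed
    define y where "y = Min Y"
    have y: "y \<in> set_pmf K" "l < y" using Min_in[OF finY \<open>Y \<noteq> {}\<close>] unfolding y_def Y_def by auto
    have "prob_ge K y = prob_gt K l" unfolding prob_ge_def prob_gt_def
    proof (rule E_cong)
      fix z assume "z \<in> set_pmf K"
      then have "l < z \<Longrightarrow> y \<le> z" using finY unfolding y_def Y_def by (intro Min_le) auto
      then show "(if y \<le> z then 1 else 0) = (if l < z then 1 else (0::real))" using y by auto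
    qed
    then have "y \<in> S" using y big unfolding S_def by simp
    then show False using Max_ge[OF finS] y unfolding l_def by fastforce
  qed
  then show ?thesis using ge unfolding upper_quantile_def by blast
qed

text \<open>Every top-\<open>q\<close> weight of \<open>K\<close> puts full weight strictly above an upper \<open>q\<close>-quantile
  and no weight strictly below it.\<close>
lemma top_weight_integral:
  assumes fin: "finite (set_pmf K)" and w: "top_weight (pmf_borel K) q w" and l: "upper_quantile K q l"
  shows "integral\<^sup>L (pmf_borel K) (\<lambda>x. x * w x) = l * q + excess K l"
proof -
  have wm: "w \<in> borel_measurable borel" and w01: "\<And>x. 0 \<le> w x \<and> w x \<le> 1"
    and mono: "\<And>x y. x < y \<Longrightarrow> 0 < w x \<Longrightarrow> w y = 1" and "integral\<^sup>L (pmf_borel K) w = q"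
    using w unfolding top_weight_def by blast+
  then have Ew: "E K w = q" by (simp add: integral_pmf_borel)
  have hi: "w x = 1" if x: "x \<in> set_pmf K" "l < x" for x
  proof (rule ccontr)
    assume "w x \<noteq> 1"
    then have wx: "w x < 1" using w01[of x] by simp
    have "w y = 0" if "y < x" for y using mono[OF that] wx w01[of y] by force
    then have "0 < E K (\<lambda>y. (if x \<le> y then 1 else 0) - w y)"
      using w01 wx by (intro E_pos[OF fin _ x(1)]) (auto simp: not_le)
    then have "E K w < prob_ge K x" unfolding prob_ge_def using fin by (simp add: E_diff)
    also have "prob_ge K x \<le> prob_gt K l" unfolding prob_ge_def prob_gt_def using fin x(2) by (intro E_mono) auto
    finally show False using Ew l unfolding upper_quantile_def by simp
  qed
  have lo: "w x = 0" if x: "x \<in> set_pmf K" "x < l" for x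
  proof (rule ccontr)
    assume "w x \<noteq> 0"
    then have wx: "0 < w x" using w01[of x] by simp
    have "0 < E K (\<lambda>y. w y - (if l \<le> y then 1 else 0))"
      using mono[OF _ wx] w01 wx x(2) by (intro E_pos[OF fin _ x(1)]) force+
    then have "prob_ge K l < E K w" unfolding prob_ge_def using fin by (simp add: E_diff)
    then show False using Ew l unfolding upper_quantile_def by simp
  qed
  have "integral\<^sup>L (pmf_borel K) (\<lambda>x. x * w x) = E K (\<lambda>x. x * w x)"
    using wm by (intro integral_pmf_borel) measurable
  also have "\<dots> = E K (\<lambda>x. l * w x + max 0 (x - l))"
  proof (rule E_cong)
    fix x assume x: "x \<in> set_pmf K"
    consider "l < x" | "x < l" | "x = l" by fastforce
    then show "x * w x = l * w x + max 0 (x - l)"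
      by cases (use hi[OF x] lo[OF x] in simp_all)
  qed
  also have "\<dots> = l * q + excess K l" using fin Ew by (simp add: E_add excess_def)
  finally show ?thesis .
qed

lemma top_weight_exists:
  assumes fin: "finite (set_pmf K)" and l: "upper_quantile K q l"
  shows "\<exists>w. top_weight (pmf_borel K) q w"
proof -
  define \<theta> where "\<theta> = (if pmf K l = 0 then 0 else (q - prob_gt K l) / pmf K l)"
  have gap: "prob_ge K l - prob_gt K l = pmf K l"
  proof -
    have "prob_ge K l - prob_gt K l = E K (\<lambda>x. (if l \<le> x then 1 else 0) - (if l < x then 1 else 0))"
      unfolding prob_ge_def prob_gt_def using fin by (simp add: E_diff)
    also have "\<dots> = E K (indicator {l})" by (intro E_cong) (auto split: split_indicator)
    finally show ?thesis by (simp add: measure_pmf_single)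
  qed
  then have \<theta>: "0 \<le> \<theta>" "\<theta> \<le> 1" "prob_gt K l + \<theta> * pmf K l = q"
    using l unfolding \<theta>_def upper_quantile_def by (auto simp: divide_le_eq_1)
  define w where "w x = indicator {l<..} x + \<theta> * indicator {l} x" for x :: real
  have wm: "w \<in> borel_measurable borel" unfolding w_def by measurable
  have "integral\<^sup>L (pmf_borel K) w = E K (\<lambda>x. (if l < x then 1 else 0) + \<theta> * indicator {l} x)"
    unfolding integral_pmf_borel[OF wm] w_def by (intro E_cong) (auto split: split_indicator)
  also have "\<dots> = q" using fin \<theta>(3) by (simp add: E_add prob_gt_def measure_pmf_single)
  finally have "integral\<^sup>L (pmf_borel K) w = q" .
  moreover have "w y = 1" if "x < y" "0 < w x" for x y
  proof -
    have "l \<le> x"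
    proof (rule ccontr)
      assume "\<not> l \<le> x"
      then have "w x = 0" unfolding w_def by (simp split: split_indicator)
      then show False using \<open>0 < w x\<close> by simp
    qed
    then show ?thesis using \<open>x < y\<close> unfolding w_def by simp
  qed
  moreover have "0 \<le> w x \<and> w x \<le> 1" for x
    unfolding w_def using \<theta> by (simp split: split_indicator)
  ultimately show ?thesis unfolding top_weight_def using wm by blast
qed

lemma F_top_pmf_borel:
  assumes fin: "finite (set_pmf K)" and q: "0 \<le> q" and l: "upper_quantile K q l"
  shows "q * F_top (pmf_borel K) q = l * q + excess K l"
proof (cases "q = 0")
  case True
  have "x \<le> l" if "x \<in> set_pmf K" for x
  proof (rule ccontr)
    assume "\<not> x \<le> l"
    then have "0 < prob_gt K l" unfolding prob_gt_def by (intro E_pos[OF fin _ that]) auto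
    then show False using l True unfolding upper_quantile_def by simp
  qed
  then show ?thesis using True excess_eq_0 by simp
next
  case False
  let ?P = "\<lambda>v. \<exists>w. top_weight (pmf_borel K) q w \<and> v = integral\<^sup>L (pmf_borel K) (\<lambda>x. x * w x)"
  obtain w where "top_weight (pmf_borel K) q w" using top_weight_exists[OF fin l] by blast
  then have "?P (integral\<^sup>L (pmf_borel K) (\<lambda>x. x * w x))" by blast
  then have "?P (SOME v. ?P v)" by (rule someI)
  then have "(SOME v. ?P v) = l * q + excess K l" using top_weight_integral[OF fin _ l] by auto
  then show ?thesis unfolding F_top_def using False by simp
qed

lemma F_top_pmf_borel_le:
  assumes fin: "finite (set_pmf K)" and q: "0 \<le> q" "q \<le> 1"
  shows "q * F_top (pmf_borel K) q \<le> E K abs"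
proof -
  obtain l where l: "upper_quantile K q l" using upper_quantile_exists[OF fin q] by blast
  obtain w where w: "top_weight (pmf_borel K) q w" using top_weight_exists[OF fin l] by blast
  then have wm: "w \<in> borel_measurable borel" and w01: "\<And>x. 0 \<le> w x \<and> w x \<le> 1"
    unfolding top_weight_def by blast+
  have "q * F_top (pmf_borel K) q = integral\<^sup>L (pmf_borel K) (\<lambda>x. x * w x)"
    using F_top_pmf_borel[OF fin q(1) l] top_weight_integral[OF fin w l] by simp
  also have "\<dots> = E K (\<lambda>x. x * w x)" using wm by (intro integral_pmf_borel) measurable
  also have "\<dots> \<le> E K abs"
  proof (intro E_mono[OF fin])
    fix x
    have "x * w x \<le> \<bar>x\<bar> * w x" using w01[of x] by (intro mult_right_mono) auto
    also have "\<dots> \<le> \<bar>x\<bar>" using w01[of x] by (intro mult_left_le) auto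
    finally show "x * w x \<le> \<bar>x\<bar>" .
  qed
  finally show ?thesis .
qed

primrec fo_val_pmf :: "('n \<Rightarrow> real pmf) \<Rightarrow> 'n fo_alg \<Rightarrow> real" where
  "fo_val_pmf K FHalt = 0"
| "fo_val_pmf K (Probe i \<tau> ka kr) =
     E (K i) (\<lambda>x. if \<tau> \<le> x then x + fo_val_pmf K (ka x) else fo_val_pmf K (kr x))"

text \<open>The constraints of \<open>fo_adm\<close> without its integrability condition, which is automatic for
  finite supports.\<close>
inductive fo_feasible :: "'n set set \<Rightarrow> 'n set \<Rightarrow> 'n set \<Rightarrow> 'n fo_alg \<Rightarrow> bool" for F where
  fo_feasible_halt: "fo_feasible F S R FHalt"
| fo_feasible_probe: "i \<notin> S \<union> R \<Longrightarrow> insert i S \<in> F \<Longrightarrow>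
    (\<forall>x. fo_feasible F (insert i S) R (ka x)) \<Longrightarrow> (\<forall>x. fo_feasible F S (insert i R) (kr x)) \<Longrightarrow>
    fo_feasible F S R (Probe i \<tau> ka kr)"

lemma fo_adm_imp_fo_feasible: "fo_adm F D S R t \<Longrightarrow> fo_feasible F S R t"
  by (induction rule: fo_adm.induct) (auto intro: fo_feasible.intros)

lemma fo_val_pmf_borel:
  "fo_adm F (\<lambda>i. pmf_borel (K i)) S R t \<Longrightarrow> fo_val (\<lambda>i. pmf_borel (K i)) t = fo_val_pmf K t"
proof (induction rule: fo_adm.induct)
  case (2 i S R ka kr \<tau>)
  let ?f = "\<lambda>x. if \<tau> \<le> x then x + fo_val (\<lambda>i. pmf_borel (K i)) (ka x) else fo_val (\<lambda>i. pmf_borel (K i)) (kr x)"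
  have "?f \<in> borel_measurable borel"
    using 2 by (intro borel_measurable_if_integrable_pmf_borel) simp
  moreover have "?f = (\<lambda>x. if \<tau> \<le> x then x + fo_val_pmf K (ka x) else fo_val_pmf K (kr x))"
    using 2 by (intro ext) simp
  ultimately show ?case by (simp add: integral_pmf_borel)
qed simp

lemma fo_val_pmf_fun_upd_decided:
  "fo_feasible F S R t \<Longrightarrow> j \<in> S \<union> R \<Longrightarrow> fo_val_pmf (K(j := A)) t = fo_val_pmf (K(j := B)) t"
proof (induction rule: fo_feasible.induct)
  case (fo_feasible_probe i S R ka kr \<tau>)
  then have "i \<noteq> j" by auto
  moreover have "fo_val_pmf (K(j := A)) (ka x) = fo_val_pmf (K(j := B)) (ka x)"
    and "fo_val_pmf (K(j := A)) (kr x) = fo_val_pmf (K(j := B)) (kr x)" for x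
    using fo_feasible_probe(3,4) fo_feasible_probe.prems by blast+
  then have "(\<lambda>x. if \<tau> \<le> x then x + fo_val_pmf (K(j := A)) (ka x) else fo_val_pmf (K(j := A)) (kr x)) =
      (\<lambda>x. if \<tau> \<le> x then x + fo_val_pmf (K(j := B)) (ka x) else fo_val_pmf (K(j := B)) (kr x))"
    by (intro ext) simp
  moreover have "(K(j := A)) i = K i" "(K(j := B)) i = K i" using \<open>i \<noteq> j\<close> by simp_all
  ultimately show ?case by (simp only: fo_val_pmf.simps)
qed simp

lemma fo_val_pmf_mix_pmf:
  assumes fin: "\<forall>i. finite (set_pmf (K i))" and fA: "finite (set_pmf A)" and fB: "finite (set_pmf B)"
    and \<alpha>: "0 \<le> \<alpha>" "\<alpha> \<le> 1"
  shows "fo_feasible F S R t \<Longrightarrow> j \<notin> S \<union> R \<Longrightarrow>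
    fo_val_pmf (K(j := mix_pmf \<alpha> A B)) t = \<alpha> * fo_val_pmf (K(j := A)) t + (1 - \<alpha>) * fo_val_pmf (K(j := B)) t"
proof (induction rule: fo_feasible.induct)
  case (fo_feasible_probe i S R ka kr \<tau>)
  show ?case
  proof (cases "i = j")
    case True
    let ?f = "\<lambda>x. if \<tau> \<le> x then x + fo_val_pmf K (ka x) else fo_val_pmf K (kr x)"
    have "fo_val_pmf (K(j := X)) (ka x) = fo_val_pmf K (ka x)" for X x
      using fo_val_pmf_fun_upd_decided[of F "insert i S" R "ka x" j K X "K j"] fo_feasible_probe(3) True
      by simp
    moreover have "fo_val_pmf (K(j := X)) (kr x) = fo_val_pmf K (kr x)" for X x
      using fo_val_pmf_fun_upd_decided[of F S "insert i R" "kr x" j K X "K j"] fo_feasible_probe(4) True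
      by simp
    ultimately have "(\<lambda>x. if \<tau> \<le> x then x + fo_val_pmf (K(j := X)) (ka x) else fo_val_pmf (K(j := X)) (kr x)) = ?f"
      for X by (intro ext) simp
    then have "fo_val_pmf (K(j := X)) (Probe i \<tau> ka kr) = E X ?f" for X
      using True by (simp only: fo_val_pmf.simps fun_upd_same)
    then show ?thesis by (simp only: E_mix_pmf[OF fA fB \<alpha>])
  next
    case False
    let ?f = "\<lambda>X x. if \<tau> \<le> x then x + fo_val_pmf (K(j := X)) (ka x) else fo_val_pmf (K(j := X)) (kr x)"
    have "fo_val_pmf (K(j := mix_pmf \<alpha> A B)) t =
        \<alpha> * fo_val_pmf (K(j := A)) t + (1 - \<alpha>) * fo_val_pmf (K(j := B)) t"
      if "t \<in> range ka \<union> range kr" for t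
      using fo_feasible_probe(3,4) fo_feasible_probe.prems False that by blast
    then have "fo_val_pmf (K(j := mix_pmf \<alpha> A B)) (Probe i \<tau> ka kr) = E (K i) (\<lambda>x. \<alpha> * ?f A x + (1 - \<alpha>) * ?f B x)"
      using False by (simp, intro E_cong) (simp add: algebra_simps)
    also have "\<dots> = \<alpha> * E (K i) (?f A) + (1 - \<alpha>) * E (K i) (?f B)"
      using fin by (subst E_add) simp_all
    finally show "fo_val_pmf (K(j := mix_pmf \<alpha> A B)) (Probe i \<tau> ka kr) =
        \<alpha> * fo_val_pmf (K(j := A)) (Probe i \<tau> ka kr) + (1 - \<alpha>) * fo_val_pmf (K(j := B)) (Probe i \<tau> ka kr)"
      using False by simp
  qed
qed simp

lemma fo_val_pmf_mix_pmf_le: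
  fixes K1 K2 :: "'n::finite \<Rightarrow> real pmf"
  assumes f1: "\<And>i. finite (set_pmf (K1 i))" and f2: "\<And>i. finite (set_pmf (K2 i))"
    and \<alpha>: "\<And>i. 0 \<le> \<alpha> i \<and> \<alpha> i \<le> 1" and alg: "fo_feasible F {} {} alg"
    and pure: "\<And>ch. fo_val_pmf (\<lambda>i. if ch i then K1 i else K2 i) alg \<le> C"
  shows "fo_val_pmf (\<lambda>i. mix_pmf (\<alpha> i) (K1 i) (K2 i)) alg \<le> C"
proof -
  define KJ where "KJ J ch i = (if i \<in> J then mix_pmf (\<alpha> i) (K1 i) (K2 i) else if ch i then K1 i else K2 i)"
    for J ch i
  have fin: "finite (set_pmf (KJ J ch i))" for J ch i
    unfolding KJ_def by (auto intro: finite_set_mix_pmf f1 f2)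
  have main: "fo_val_pmf (KJ J ch) alg \<le> C" if "finite J" for J ch
    using that
  proof (induction J arbitrary: ch rule: finite_induct)
    case empty
    then show ?case using pure[of ch] by (simp add: KJ_def)
  next
    case (insert j J)
    have upd: "KJ (insert j J) ch = (KJ J ch)(j := mix_pmf (\<alpha> j) (K1 j) (K2 j))"
      "(KJ J ch)(j := K1 j) = KJ J (ch(j := True))" "(KJ J ch)(j := K2 j) = KJ J (ch(j := False))"
      unfolding KJ_def using insert(2) by (auto simp: fun_eq_iff)
    have "fo_val_pmf ((KJ J ch)(j := mix_pmf (\<alpha> j) (K1 j) (K2 j))) alg =
        \<alpha> j * fo_val_pmf ((KJ J ch)(j := K1 j)) alg + (1 - \<alpha> j) * fo_val_pmf ((KJ J ch)(j := K2 j)) alg"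
      using fin \<alpha>[of j] by (intro fo_val_pmf_mix_pmf[OF _ f1 f2 _ _ alg]) auto
    then have "fo_val_pmf (KJ (insert j J) ch) alg =
        \<alpha> j * fo_val_pmf (KJ J (ch(j := True))) alg + (1 - \<alpha> j) * fo_val_pmf (KJ J (ch(j := False))) alg"
      by (simp only: upd)
    also have "\<dots> \<le> \<alpha> j * C + (1 - \<alpha> j) * C"
      using insert(3) \<alpha>[of j] by (intro add_mono mult_left_mono) auto
    finally show ?case by (simp add: algebra_simps)
  qed
  have "KJ UNIV (\<lambda>_. True) = (\<lambda>i. mix_pmf (\<alpha> i) (K1 i) (K2 i))"
    by (intro ext) (simp add: KJ_def)
  then show ?thesis using main[of UNIV "\<lambda>_. True"] by simp
qed

lemma FreeOrder_bounds:
  assumes "\<And>t. fo_adm F D {} {} t \<Longrightarrow> fo_val D t \<le> C"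
  shows "0 \<le> FreeOrder F D \<and> FreeOrder F D \<le> C"
proof -
  let ?S = "{fo_val D t | t. fo_adm F D {} {} t}"
  have "0 \<in> ?S" using fo_adm.intros(1) by force
  moreover have "bdd_above ?S" using assms by (auto simp: bdd_above_def)
  ultimately have "0 \<le> Sup ?S" by (rule cSup_upper)
  moreover have "Sup ?S \<le> C" using \<open>0 \<in> ?S\<close> assms by (intro cSup_least) auto
  ultimately show ?thesis unfolding FreeOrder_def by simp
qed

section \<open>Simulating free-order algorithms by committing policies\<close>

definition achievable :: "'n set set \<Rightarrow> ('n \<Rightarrow> ('s,'a) mdp) \<Rightarrow> ('n \<Rightarrow> 's \<Rightarrow> 'a pmf) \<Rightarrow> ('n \<Rightarrow> 's) \<Rightarrow> real \<Rightarrow> bool" where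
  "achievable F M \<pi> c b \<longleftrightarrow> (\<exists>t. valid_pol F M c t \<and> commits \<pi> c t \<and> b \<le> util M c t)"

lemma achievable_mono: "achievable F M \<pi> c b \<Longrightarrow> b' \<le> b \<Longrightarrow> achievable F M \<pi> c b'"
  unfolding achievable_def by force

text \<open>Probing \<open>i\<close> with threshold \<open>\<tau>\<close> is simulated by advancing \<open>M i\<close> along \<open>\<sigma>\<close> while the running
  minimum \<open>m\<close> of the caps stays at least \<open>\<tau>\<close>. The continuation values \<open>A\<close> (after accepting) and
  \<open>B\<close> (after rejecting) are given as functions of the capped value.\<close>
locale probe_simulation =
  fixes F :: "'n set set" and M :: "'n \<Rightarrow> ('s,'a) mdp" and \<pi> :: "'n \<Rightarrow> 's \<Rightarrow> 'a pmf"
    and c :: "'n \<Rightarrow> 's" and i :: 'n and \<sigma> :: "'s \<Rightarrow> 'a"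
    and \<tau> b :: real and A B :: "real \<Rightarrow> real"
  assumes Mi: "is_mdp (M i)" and \<sigma>: "\<sigma> \<in> det_commitments (M i)"
    and \<pi>: "\<And>s. \<pi> i s = return_pmf (\<sigma> s)"
    and accept: "\<And>x s. s \<in> m_term (M i) \<Longrightarrow> achievable F M \<pi> (c(i := s)) (b + m_val (M i) s + A x)"
    and reject: "\<And>x s. s \<in> m_states (M i) \<Longrightarrow> achievable F M \<pi> (c(i := s)) (b + B x)"
begin

definition gain :: "real \<Rightarrow> real" where
  "gain x = (if \<tau> \<le> x then x + A x else B x)"

abbreviation \<kappa> :: "'s \<Rightarrow> real pmf" where
  "\<kappa> \<equiv> capped_value (M i) \<sigma>"

text \<open>The invariant of the simulation at state \<open>s\<close> when the caps met so far have minimum \<open>m\<close>: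
  the excess of \<open>\<kappa> s\<close> over \<open>m\<close> compensates for capping the gain at \<open>m\<close>.\<close>
definition guarantee :: "'s \<Rightarrow> real \<Rightarrow> real" where
  "guarantee s m = b + E (\<kappa> s) (\<lambda>x. gain (min m x)) + excess (\<kappa> s) m"

lemma achievable_guarantee_term:
  assumes s: "s \<in> m_term (M i)" and m: "\<tau> \<le> m"
  shows "achievable F M \<pi> (c(i := s)) (guarantee s m)"
proof -
  let ?v = "m_val (M i) s"
  have guarantee: "guarantee s m = b + gain (min m ?v) + max 0 (?v - m)"
    unfolding guarantee_def by (simp add: capped_value_term[OF Mi \<sigma> s] excess_def)
  show ?thesis
  proof (cases "\<tau> \<le> min m ?v")
    case True
    then have "guarantee s m = b + ?v + A (min m ?v)" unfolding guarantee by (simp add: gain_def min_def max_def)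
    then show ?thesis using accept[OF s] by simp
  next
    case False
    then have "guarantee s m = b + B ?v" unfolding guarantee using m by (auto simp: gain_def min_def)
    then show ?thesis using reject s is_mdpD(3)[OF Mi] by auto
  qed
qed

lemma achievable_guarantee_stop:
  assumes s: "s \<in> m_states (M i)" "s \<notin> m_term (M i)" and stop: "cap (M i) \<sigma> s < \<tau>" and m: "\<tau> \<le> m"
  shows "achievable F M \<pi> (c(i := s)) (guarantee s m)"
proof -
  have below: "x < \<tau>" if "x \<in> set_pmf (\<kappa> s)" for x
    using that stop by (auto simp: capped_value_nonterm[OF Mi \<sigma> s])
  obtain x where "E (map_pmf (min m) (\<kappa> s)) B \<le> B x"
    using E_le_some_value[of "map_pmf (min m) (\<kappa> s)"] finite_capped_value[OF Mi \<sigma>] by auto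
  moreover have "E (\<kappa> s) (\<lambda>x. gain (min m x)) = E (map_pmf (min m) (\<kappa> s)) B"
  proof -
    have "gain (min m x) = B (min m x)" if "x \<in> set_pmf (\<kappa> s)" for x
      using below[OF that] m by (auto simp: gain_def min_def)
    then show ?thesis by (simp cong: E_cong)
  qed
  moreover have "excess (\<kappa> s) m = 0"
    using below m by (intro excess_eq_0) force
  ultimately have "guarantee s m \<le> b + B x" unfolding guarantee_def by simp
  then show ?thesis using achievable_mono reject[OF s(1)] by blast
qed

lemma achievable_guarantee_advance:
  assumes s: "s \<in> m_states (M i)" "s \<notin> m_term (M i)" and m: "m' = min m (cap (M i) \<sigma> s)"
    and next_ok: "\<And>s'. s' \<in> set_pmf (m_trans (M i) s (\<sigma> s)) \<Longrightarrow> achievable F M \<pi> (c(i := s')) (guarantee s' m')"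
  shows "achievable F M \<pi> (c(i := s)) (guarantee s m)"
proof -
  let ?T = "m_trans (M i) s (\<sigma> s)" and ?cost = "m_cost (M i) s (\<sigma> s)"
  obtain t where t: "\<And>s'. s' \<in> set_pmf ?T \<Longrightarrow>
      valid_pol F M (c(i := s')) (t s') \<and> commits \<pi> (c(i := s')) (t s') \<and> guarantee s' m' \<le> util M (c(i := s')) (t s')"
    using next_ok unfolding achievable_def by metis
  define k where "k a s' = (if s' \<in> set_pmf ?T then t s' else Halt {})" for a :: 'a and s'
  have valid: "valid_pol F M (c(i := s)) (Adv i (return_pmf (\<sigma> s)) k)"
    using s t det_commitment_act[OF Mi \<sigma> s] by (intro valid_pol.adv) (auto simp: k_def)
  have commits: "commits \<pi> (c(i := s)) (Adv i (return_pmf (\<sigma> s)) k)"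
    using t by (intro commits.intros(2)) (auto simp: \<pi> k_def intro: commits.intros(1))
  note finT = det_commitment_trans_finite[OF Mi \<sigma> s]
  have "E ?T (\<lambda>s'. guarantee s' m') = b + E (next_capped (M i) \<sigma> s) (\<lambda>x. gain (min m' x)) + excess (next_capped (M i) \<sigma> s) m'"
    unfolding guarantee_def using finT
    by (simp add: E_add E_next_capped[OF Mi \<sigma> s] excess_next_capped[OF Mi \<sigma> s])
  also have "E (next_capped (M i) \<sigma> s) (\<lambda>x. gain (min m' x)) = E (\<kappa> s) (\<lambda>x. gain (min m x))"
    unfolding m by (simp add: capped_value_nonterm[OF Mi \<sigma> s] min.assoc)
  also have "excess (next_capped (M i) \<sigma> s) m' = excess (\<kappa> s) m + ?cost"
    using excess_min_excess_level[OF finite_next_capped[OF Mi \<sigma> s] det_commitment_cost[OF Mi \<sigma> s], of m]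
    unfolding m cap_def by (simp add: excess_capped_value_nonterm[OF Mi \<sigma> s])
  finally have "guarantee s m = - ?cost + E ?T (\<lambda>s'. guarantee s' m')" unfolding guarantee_def by simp
  also have "\<dots> \<le> - ?cost + E ?T (\<lambda>s'. util M (c(i := s')) (k (\<sigma> s) s'))"
    using t finT by (intro add_left_mono E_mono) (auto simp: k_def)
  also have "\<dots> = util M (c(i := s)) (Adv i (return_pmf (\<sigma> s)) k)" by simp
  finally show ?thesis using valid commits unfolding achievable_def by blast
qed

lemma achievable_guarantee: "s \<in> m_states (M i) \<Longrightarrow> \<tau> \<le> m \<Longrightarrow> achievable F M \<pi> (c(i := s)) (guarantee s m)"
proof (induction s arbitrary: m rule: mdp_edges_induct[OF Mi, case_names step])
  case (step s)
  consider "s \<in> m_term (M i)" | "s \<notin> m_term (M i)" "cap (M i) \<sigma> s < \<tau>" | "s \<notin> m_term (M i)" "\<tau> \<le> cap (M i) \<sigma> s"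
    by fastforce
  then show ?case
  proof cases
    case 1
    then show ?thesis by (rule achievable_guarantee_term[OF _ step.prems(2)])
  next
    case 2
    then show ?thesis by (rule achievable_guarantee_stop[OF step.prems(1) _ _ step.prems(2)])
  next
    case 3
    show ?thesis
    proof (rule achievable_guarantee_advance[OF step.prems(1) 3(1) refl])
      fix s' assume s': "s' \<in> set_pmf (m_trans (M i) s (\<sigma> s))"
      have "\<tau> \<le> min m (cap (M i) \<sigma> s)" using 3(2) step.prems(2) by simp
      then show "achievable F M \<pi> (c(i := s')) (guarantee s' (min m (cap (M i) \<sigma> s)))"
        by (rule step.IH[OF det_commitment_edge[OF Mi \<sigma> step.prems(1) 3(1) s']
            det_commitment_trans_states[OF Mi \<sigma> step.prems(1) 3(1) s']])
    qed
  qed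
qed

lemma achievable_root: "achievable F M \<pi> (c(i := m_root (M i))) (b + E (\<kappa> (m_root (M i))) gain)"
proof -
  let ?r = "m_root (M i)"
  define m where "m = max \<tau> (Max (set_pmf (\<kappa> ?r)))"
  have le: "x \<le> m" if "x \<in> set_pmf (\<kappa> ?r)" for x
    using Max_ge[OF finite_capped_value[OF Mi \<sigma>] that] unfolding m_def by simp
  have "guarantee ?r m = b + E (\<kappa> ?r) gain"
    unfolding guarantee_def using le excess_eq_0[OF le] by (simp add: min_absorb2 cong: E_cong)
  moreover have "\<tau> \<le> m" unfolding m_def by simp
  then have "achievable F M \<pi> (c(i := ?r)) (guarantee ?r m)"
    by (rule achievable_guarantee[OF is_mdpD(2)[OF Mi]])
  ultimately show ?thesis by simp
qed

end

lemma achievable_fo_feasible: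
  fixes M :: "'n::finite \<Rightarrow> ('s,'a) mdp" and \<sigma> :: "'n \<Rightarrow> 's \<Rightarrow> 'a"
  assumes M: "\<forall>j. is_mdp (M j)" and \<sigma>: "\<forall>j. \<sigma> j \<in> det_commitments (M j)"
  defines "K \<equiv> \<lambda>j. capped_value (M j) (\<sigma> j) (m_root (M j))"
  shows "fo_feasible F S R alg \<Longrightarrow> S \<in> F \<Longrightarrow> \<forall>j. c j \<in> m_states (M j) \<Longrightarrow> \<forall>j\<in>S. c j \<in> m_term (M j) \<Longrightarrow>
    \<forall>j. j \<notin> S \<union> R \<longrightarrow> c j = m_root (M j) \<Longrightarrow>
    achievable F M (\<lambda>j s. return_pmf (\<sigma> j s)) c ((\<Sum>j\<in>S. m_val (M j) (c j)) + fo_val_pmf K alg)"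
proof (induction arbitrary: c rule: fo_feasible.induct)
  case (fo_feasible_halt S R)
  then have "valid_pol F M c (Halt S)" by (intro valid_pol.halt) auto
  then show ?case unfolding achievable_def by (force intro: commits.intros(1))
next
  case (fo_feasible_probe i S R ka kr \<tau>)
  let ?\<pi> = "\<lambda>j s. return_pmf (\<sigma> j s)"
  let ?b = "\<Sum>j\<in>S. m_val (M j) (c j)"
  have i: "i \<notin> S" "c i = m_root (M i)" using fo_feasible_probe by auto
  have sum_upd: "(\<Sum>j\<in>S. m_val (M j) ((c(i := s)) j)) = ?b" for s
    using i by (intro sum.cong) auto
  have IH_accept: "achievable F M ?\<pi> c'
      ((\<Sum>j\<in>insert i S. m_val (M j) (c' j)) + fo_val_pmf K (ka x))"
    if "\<forall>j. c' j \<in> m_states (M j)" "\<forall>j\<in>insert i S. c' j \<in> m_term (M j)"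
      "\<forall>j. j \<notin> insert i S \<union> R \<longrightarrow> c' j = m_root (M j)" for c' x
    using fo_feasible_probe(2,3) that by blast
  have IH_reject: "achievable F M ?\<pi> c'
      ((\<Sum>j\<in>S. m_val (M j) (c' j)) + fo_val_pmf K (kr x))"
    if "\<forall>j. c' j \<in> m_states (M j)" "\<forall>j\<in>S. c' j \<in> m_term (M j)"
      "\<forall>j. j \<notin> S \<union> insert i R \<longrightarrow> c' j = m_root (M j)" for c' x
    using fo_feasible_probe(4) fo_feasible_probe.prems(1) that by blast
  interpret probe_simulation F M ?\<pi> c i "\<sigma> i" \<tau> ?b
      "\<lambda>x. fo_val_pmf K (ka x)" "\<lambda>x. fo_val_pmf K (kr x)"
  proof
    show "is_mdp (M i)" "\<sigma> i \<in> det_commitments (M i)" using M \<sigma> by auto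
  next
    fix x s assume s: "s \<in> m_term (M i)"
    have "achievable F M ?\<pi> (c(i := s))
        ((\<Sum>j\<in>insert i S. m_val (M j) ((c(i := s)) j)) + fo_val_pmf K (ka x))"
      using fo_feasible_probe.prems s is_mdpD(3)[of "M i"] M by (intro IH_accept) auto
    then show "achievable F M ?\<pi> (c(i := s)) (?b + m_val (M i) s + fo_val_pmf K (ka x))"
      using i(1) sum_upd[of s] by (simp add: algebra_simps)
  next
    fix x s assume s: "s \<in> m_states (M i)"
    have "achievable F M ?\<pi> (c(i := s))
        ((\<Sum>j\<in>S. m_val (M j) ((c(i := s)) j)) + fo_val_pmf K (kr x))"
      using fo_feasible_probe.prems s i(1) by (intro IH_reject) auto
    then show "achievable F M ?\<pi> (c(i := s)) (?b + fo_val_pmf K (kr x))"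
      using sum_upd[of s] by simp
  qed simp
  have "K i = capped_value (M i) (\<sigma> i) (m_root (M i))" by (simp add: K_def)
  then show ?case using achievable_root i(2) by (simp add: gain_def[abs_def] fun_upd_idem)
qed

lemma roots_in_states: "\<forall>j. is_mdp (M j) \<Longrightarrow> \<forall>j. roots M j \<in> m_states (M j)"
  unfolding roots_def using is_mdpD(2) by blast

lemma bdd_above_util:
  fixes M :: "'n::finite \<Rightarrow> ('s,'a) mdp"
  assumes M: "\<forall>j. is_mdp (M j)"
  shows "bdd_above {util M (roots M) t | t. valid_pol F M (roots M) t}"
proof -
  have "util M (roots M) t \<le> (\<Sum>j\<in>UNIV. priced_value (M j) 0 (roots M j))" if "valid_pol F M (roots M) t" for t
    using util_le_lagrangian[OF that M roots_in_states[OF M], of "\<lambda>_. 0"] by simp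
  then show ?thesis unfolding bdd_above_def by blast
qed

lemma achievable_le_commit_OPT:
  fixes M :: "'n::finite \<Rightarrow> ('s,'a) mdp"
  assumes M: "\<forall>j. is_mdp (M j)" and \<pi>: "commitment M \<pi>" and b: "achievable F M \<pi> (roots M) b"
  shows "b \<le> commit_OPT F M"
proof -
  let ?C = "{util M (roots M) t | t \<pi>. commitment M \<pi> \<and> valid_pol F M (roots M) t \<and> commits \<pi> (roots M) t}"
  obtain t where t: "valid_pol F M (roots M) t" "commits \<pi> (roots M) t" "b \<le> util M (roots M) t"
    using b unfolding achievable_def by blast
  have "bdd_above ?C" by (rule bdd_above_mono[OF bdd_above_util[OF M, of F]]) blast
  then have "util M (roots M) t \<le> Sup ?C" using t \<pi> by (intro cSup_upper) blast+
  then show ?thesis unfolding commit_OPT_def using t(3) by simp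
qed

lemma commitment_det_commitments:
  "\<forall>j. \<sigma> j \<in> det_commitments (M j) \<Longrightarrow> commitment M (\<lambda>j s. return_pmf (\<sigma> j s))"
  unfolding commitment_def det_commitments_def by auto

lemma commit_OPT_nonneg:
  fixes M :: "'n::finite \<Rightarrow> ('s,'a) mdp"
  assumes F0: "{} \<in> F" and M: "\<forall>j. is_mdp (M j)"
  shows "0 \<le> commit_OPT F M"
proof (rule achievable_le_commit_OPT[OF M])
  let ?\<sigma> = "\<lambda>j. greedy_commitment (M j) 0"
  show "commitment M (\<lambda>j s. return_pmf (?\<sigma> j s))"
    using greedy_commitment_in M by (intro commitment_det_commitments) blast
  have "valid_pol F M (roots M) (Halt {})" using F0 by (intro valid_pol.halt) auto
  then show "achievable F M (\<lambda>j s. return_pmf (?\<sigma> j s)) (roots M) 0"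
    unfolding achievable_def by (force intro: commits.intros(1))
qed

definition mixed_capped :: "('s,'a) mdp \<Rightarrow> real pmf \<Rightarrow> bool" where
  "mixed_capped M K \<longleftrightarrow> (\<exists>\<sigma>1\<in>det_commitments M. \<exists>\<sigma>2\<in>det_commitments M. \<exists>\<alpha>\<in>{0..1}.
     K = mix_pmf \<alpha> (capped_value M \<sigma>1 (m_root M)) (capped_value M \<sigma>2 (m_root M)))"

lemma finite_mixed_capped: "is_mdp M \<Longrightarrow> mixed_capped M K \<Longrightarrow> finite (set_pmf K)"
  unfolding mixed_capped_def by (auto intro: finite_set_mix_pmf finite_capped_value)

lemma exists_mixed_capped_quantile:
  assumes M: "is_mdp M" and q: "0 \<le> q" "q \<le> 1"
  shows "\<exists>K l. mixed_capped M K \<and> upper_quantile K q l \<and> priced_value M l (m_root M) = excess K l"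
proof -
  let ?K = "\<lambda>\<sigma>. capped_value M \<sigma> (m_root M)"
  have "finite (det_commitments M)" "det_commitments M \<noteq> {}"
    using finite_det_commitments[OF M] greedy_commitment_in[OF M] by auto
  then obtain l \<sigma>1 \<sigma>2 \<alpha> where \<sigma>: "\<sigma>1 \<in> det_commitments M" "\<sigma>2 \<in> det_commitments M" "\<alpha> \<in> {0..1}"
    and max: "excess (mix_pmf \<alpha> (?K \<sigma>1) (?K \<sigma>2)) l = max_excess ?K (det_commitments M) l"
    and quantile: "upper_quantile (mix_pmf \<alpha> (?K \<sigma>1) (?K \<sigma>2)) q l"
    using exists_optimal_mixture_quantile[of "det_commitments M" ?K q] finite_capped_value[OF M] q by blast
  have "priced_value M l (m_root M) = max_excess ?K (det_commitments M) l"
    unfolding max_excess_def by (rule priced_value_eq_Max_excess[OF M is_mdpD(2)[OF M]])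
  then show ?thesis using \<sigma> max quantile unfolding mixed_capped_def by metis
qed

lemma FreeOrder_mixed_capped:
  fixes M :: "'n::finite \<Rightarrow> ('s,'a) mdp"
  assumes M: "\<forall>j. is_mdp (M j)" and F0: "{} \<in> F" and K: "\<And>j. mixed_capped (M j) (K j)"
  shows "0 \<le> FreeOrder F (\<lambda>j. pmf_borel (K j)) \<and> FreeOrder F (\<lambda>j. pmf_borel (K j)) \<le> commit_OPT F M"
proof (rule FreeOrder_bounds)
  let ?cv = "\<lambda>\<sigma> j. capped_value (M j) (\<sigma> j) (m_root (M j))"
  have "\<forall>j. \<exists>\<sigma>1 \<sigma>2 \<alpha>. \<sigma>1 \<in> det_commitments (M j) \<and> \<sigma>2 \<in> det_commitments (M j) \<and> \<alpha> \<in> {0..1} \<and>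
      K j = mix_pmf \<alpha> (capped_value (M j) \<sigma>1 (m_root (M j))) (capped_value (M j) \<sigma>2 (m_root (M j)))"
    using K unfolding mixed_capped_def by blast
  then have "\<exists>\<sigma>1 \<sigma>2 \<alpha>. \<forall>j. \<sigma>1 j \<in> det_commitments (M j) \<and> \<sigma>2 j \<in> det_commitments (M j) \<and> \<alpha> j \<in> {0..1} \<and>
      K j = mix_pmf (\<alpha> j) (?cv \<sigma>1 j) (?cv \<sigma>2 j)"
    by (simp only: choice_iff)
  then obtain \<sigma>1 \<sigma>2 \<alpha> where \<sigma>1: "\<forall>j. \<sigma>1 j \<in> det_commitments (M j)" and \<sigma>2: "\<forall>j. \<sigma>2 j \<in> det_commitments (M j)"
    and \<alpha>: "\<And>j. 0 \<le> \<alpha> j \<and> \<alpha> j \<le> 1" and K_eq: "\<And>j. K j = mix_pmf (\<alpha> j) (?cv \<sigma>1 j) (?cv \<sigma>2 j)"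
    by auto
  fix t assume t: "fo_adm F (\<lambda>j. pmf_borel (K j)) {} {} t"
  note alg = fo_adm_imp_fo_feasible[OF t]
  have pure: "fo_val_pmf (\<lambda>j. if ch j then ?cv \<sigma>1 j else ?cv \<sigma>2 j) t \<le> commit_OPT F M" for ch
  proof -
    define \<sigma> where "\<sigma> j = (if ch j then \<sigma>1 j else \<sigma>2 j)" for j
    have \<sigma>: "\<forall>j. \<sigma> j \<in> det_commitments (M j)" unfolding \<sigma>_def using \<sigma>1 \<sigma>2 by simp
    have "achievable F M (\<lambda>j s. return_pmf (\<sigma> j s)) (roots M) ((\<Sum>j\<in>{}. m_val (M j) (roots M j)) + fo_val_pmf (?cv \<sigma>) t)"
      using F0 roots_in_states[OF M] by (intro achievable_fo_feasible[OF M \<sigma> alg]) (auto simp: roots_def)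
    then have "fo_val_pmf (?cv \<sigma>) t \<le> commit_OPT F M"
      using achievable_le_commit_OPT[OF M commitment_det_commitments[OF \<sigma>]] by simp
    moreover have "?cv \<sigma> = (\<lambda>j. if ch j then ?cv \<sigma>1 j else ?cv \<sigma>2 j)"
      unfolding \<sigma>_def by auto
    ultimately show ?thesis by simp
  qed
  have "fo_val_pmf K t \<le> commit_OPT F M"
    unfolding K_eq[abs_def] using M \<sigma>1 \<sigma>2 \<alpha> alg pure by (intro fo_val_pmf_mix_pmf_le finite_capped_value) auto
  then show "fo_val (\<lambda>j. pmf_borel (K j)) t \<le> commit_OPT F M" using fo_val_pmf_borel[OF t] by simp
qed

lemma ExAnte_ge:
  fixes K :: "'n::finite \<Rightarrow> real pmf"
  assumes q: "q \<in> polytope F" and fin: "\<And>i. finite (set_pmf (K i))"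
  shows "(\<Sum>i\<in>UNIV. q $ i * F_top (pmf_borel (K i)) (q $ i)) \<le> ExAnte F (\<lambda>i. pmf_borel (K i))"
  unfolding ExAnte_def
proof (rule cSup_upper)
  have "(\<Sum>i\<in>UNIV. q $ i * F_top (pmf_borel (K i)) (q $ i)) \<le> (\<Sum>i\<in>UNIV. E (K i) abs)"
    if "q \<in> polytope F" for q
    using polytope_coord_bounds[OF that] fin by (intro sum_mono F_top_pmf_borel_le) auto
  then show "bdd_above {\<Sum>i\<in>UNIV. q $ i * F_top (pmf_borel (K i)) (q $ i) | q. q \<in> polytope F}"
    unfolding bdd_above_def by blast
qed (use q in blast)

lemma ExAnte_nonneg:
  fixes K :: "'n::finite \<Rightarrow> real pmf"
  assumes "{} \<in> F" and "\<And>i. finite (set_pmf (K i))"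
  shows "0 \<le> ExAnte F (\<lambda>i. pmf_borel (K i))"
proof -
  have "indic_vec {} \<in> polytope F" unfolding polytope_def using assms(1) by (simp add: hull_inc)
  moreover have "indic_vec {} = (0 :: real ^ 'n)" by (simp add: indic_vec_def vec_eq_iff)
  ultimately show ?thesis using ExAnte_ge[of 0 F K] assms(2) by simp
qed

lemma product_dist_pmf_borel: "(\<And>i. finite (set_pmf (K i))) \<Longrightarrow> product_dist (\<lambda>i. pmf_borel (K i))"
  unfolding product_dist_def by (auto intro: prob_space_pmf_borel integrable_pmf_borel)

lemma exists_prophet_instance:
  fixes M :: "'n::finite \<Rightarrow> ('s,'a) mdp"
  assumes F0: "{} \<in> F" and M: "\<forall>j. is_mdp (M j)" and t: "valid_pol F M (roots M) t"
  shows "\<exists>D. product_dist D \<and> util M (roots M) t \<le> ExAnte F D \<and> 0 \<le> ExAnte F D \<and>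
    0 \<le> FreeOrder F D \<and> FreeOrder F D \<le> commit_OPT F M"
proof -
  define q where "q = (\<chi> j. sel_prob M (roots M) t j)"
  have q: "q \<in> polytope F" unfolding q_def by (rule sel_prob_in_polytope[OF t M roots_in_states[OF M]])
  have "\<exists>K l. mixed_capped (M j) K \<and> upper_quantile K (q $ j) l \<and>
      priced_value (M j) l (m_root (M j)) = excess K l" for j
    using M polytope_coord_bounds[OF q, of j] by (intro exists_mixed_capped_quantile) auto
  then have "\<forall>j. \<exists>K l. mixed_capped (M j) K \<and> upper_quantile K (q $ j) l \<and>
      priced_value (M j) l (m_root (M j)) = excess K l"
    by blast
  then have "\<exists>K l. \<forall>j. mixed_capped (M j) (K j) \<and> upper_quantile (K j) (q $ j) (l j) \<and>
      priced_value (M j) (l j) (m_root (M j)) = excess (K j) (l j)"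
    by (simp only: choice_iff)
  then obtain K l where K: "\<And>j. mixed_capped (M j) (K j)" "\<And>j. upper_quantile (K j) (q $ j) (l j)"
    "\<And>j. priced_value (M j) (l j) (m_root (M j)) = excess (K j) (l j)"
    by auto
  have fin: "\<And>j. finite (set_pmf (K j))" using finite_mixed_capped M K(1) by blast
  have "util M (roots M) t \<le> (\<Sum>j\<in>UNIV. l j * q $ j) + (\<Sum>j\<in>UNIV. priced_value (M j) (l j) (roots M j))"
    using util_le_lagrangian[OF t M roots_in_states[OF M], of l] by (simp add: q_def)
  also have "\<dots> = (\<Sum>j\<in>UNIV. q $ j * F_top (pmf_borel (K j)) (q $ j))"
  proof -
    have "l j * q $ j + priced_value (M j) (l j) (roots M j) = q $ j * F_top (pmf_borel (K j)) (q $ j)" for j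
      using F_top_pmf_borel[OF fin[of j] _ K(2)[of j]] K(3)[of j] polytope_coord_bounds[OF q, of j]
      by (simp add: roots_def)
    then show ?thesis by (simp only: sum.distrib[symmetric])
  qed
  also have "\<dots> \<le> ExAnte F (\<lambda>j. pmf_borel (K j))" by (rule ExAnte_ge[OF q fin])
  finally have "util M (roots M) t \<le> ExAnte F (\<lambda>j. pmf_borel (K j))" .
  then show ?thesis
    using product_dist_pmf_borel[OF fin] ExAnte_nonneg[OF F0 fin] FreeOrder_mixed_capped[OF M F0 K(1)]
    by (intro exI[of _ "\<lambda>j. pmf_borel (K j)"]) simp
qed

lemma ereal_divide_ereal:
  "ereal a / ereal b = (if b = 0 then (if 0 < a then \<infinity> else if a < 0 then -\<infinity> else 0) else ereal (a / b))"
  by (simp add: divide_ereal_def divide_inverse)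

lemma ereal_divide_le_divide:
  fixes u a b c :: real
  assumes "u \<le> a" "0 \<le> a" "0 \<le> b" "b \<le> c"
  shows "ereal u / ereal c \<le> ereal a / ereal b"
proof (cases "b = 0")
  case True
  then show ?thesis using assms by (auto simp: ereal_divide_ereal divide_nonpos_nonneg)
next
  case False
  then have b: "0 < b" using assms(3) by simp
  have "u / c \<le> a / c" using assms(1,3,4) b by (simp add: divide_right_mono)
  also have "\<dots> \<le> a / b" using assms(2,4) b by (intro divide_left_mono) auto
  finally have "u / c \<le> a / b" .
  then show ?thesis using False assms by (simp add: ereal_divide_ereal)
qed

lemma ereal_divide_Sup_le:
  fixes U :: "real set" and c :: real and R :: ereal
  assumes U: "0 \<in> U" "bdd_above U" and c: "0 \<le> c" and le: "\<And>u. u \<in> U \<Longrightarrow> ereal u / ereal c \<le> R"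
  shows "ereal (Sup U) / ereal c \<le> R"
proof -
  have "ereal 0 / ereal c = 0" by (simp add: ereal_divide_ereal)
  then have R0: "0 \<le> R" using le[OF U(1)] by simp
  have U0: "0 \<le> Sup U" using cSup_upper[OF U] .
  show ?thesis
  proof (cases "c = 0")
    case True
    show ?thesis
    proof (cases "Sup U = 0")
      case False
      then obtain u where "u \<in> U" "0 < u" using U0 less_cSup_iff[OF _ U(2), of 0] U(1) by auto
      then show ?thesis using le[of u] True by (simp add: ereal_divide_ereal)
    qed (use R0 True in \<open>simp add: ereal_divide_ereal\<close>)
  next
    case False
    then have cp: "0 < c" using c by simp
    show ?thesis
    proof (rule ccontr)
      assume "\<not> ?thesis"
      then have lt: "R < ereal (Sup U / c)" using False by (simp add: ereal_divide_ereal)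
      then obtain r where r: "R = ereal r" using R0 by (cases R) auto
      then have "r * c < Sup U" using lt cp by (simp add: pos_less_divide_eq)
      then obtain u where "u \<in> U" "r * c < u" using less_cSup_iff[OF _ U(2)] U(1) by blast
      moreover have "u / c \<le> r" using le[of u] \<open>u \<in> U\<close> r False by (simp add: ereal_divide_ereal)
      ultimately show False using cp by (simp add: divide_le_eq)
    qed
  qed
qed

theorem corollary1:
  fixes F :: "'n::finite set set" and M :: "'n \<Rightarrow> ('s,'a) mdp"
  assumes "{} \<in> F" and "downward_closed F" and "\<forall>i. is_mdp (M i)"
  shows "ComGap F M \<le>
    (SUP D \<in> {D. product_dist D}. ereal (ExAnte F D) / ereal (FreeOrder F D))"
proof -
  let ?R = "SUP D \<in> {D. product_dist D}. ereal (ExAnte F D) / ereal (FreeOrder F D)"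
  let ?U = "{util M (roots M) t | t. valid_pol F M (roots M) t}"
  have "ereal u / ereal (commit_OPT F M) \<le> ?R" if u: "u \<in> ?U" for u
  proof -
    obtain t where t: "valid_pol F M (roots M) t" "u = util M (roots M) t" using u by blast
    then obtain D where D: "product_dist D" "u \<le> ExAnte F D" "0 \<le> ExAnte F D"
        "0 \<le> FreeOrder F D" "FreeOrder F D \<le> commit_OPT F M"
      using exists_prophet_instance[OF assms(1,3)] by blast
    have "ereal u / ereal (commit_OPT F M) \<le> ereal (ExAnte F D) / ereal (FreeOrder F D)"
      using D(2-5) by (rule ereal_divide_le_divide)
    also have "\<dots> \<le> ?R" using D(1) by (intro SUP_upper) simp
    finally show ?thesis .
  qed
  moreover have "0 \<in> ?U" using assms(1) by (force intro: valid_pol.halt)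
  ultimately show ?thesis
    unfolding ComGap_def OPT_def
    by (intro ereal_divide_Sup_le bdd_above_util commit_OPT_nonneg assms(1,3))
qed

end
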